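(* The problem "given two automatic relations $R_1,R_2\subseteq\Sigma^*\times\Gamma^*$ with $R_1\cap R_2=\emptyset$, decide whether there is a recognizable relation $R$ with $R_1\subseteq R$ and $R\cap R_2=\emptyset$" reduces (via a computable reduction) to the problem "given regular languages $S,T\subseteq(\Sigma\cup\Gamma)^*$ both with finite shiftlag, decide whether $\llbracket S\rrbracket\in\textsc{Rel}(T)$".
   Context: $\Sigma,\Gamma$ are disjoint finite alphabets. For $w\in(\Sigma\cup\Gamma)^*$, $\llbracket w\rrbracket=(\pi_{\mathtt i}(w),\pi_{\mathtt o}(w))$ where $\pi_{\mathtt i}$ (resp. $\pi_{\mathtt o}$) deletes all letters of $\Gamma$ (resp. $\Sigma$), and $\llbracket L\rrbracket=\{\llbracket w\rrbracket:w\in L\}$. $\textsc{Rel}(T)=\{\llbracket T'\rrbracket: T'\subseteq T,\ T'\text{ regular}\}$. A relation is automatic if it equals $\llbracket L\rrbracket$ for some regular $L\subseteq(\Sigma\Gamma)^*(\Sigma^*+\Gamma^* )$ (and is given by such $L$); it is recognizable if it is a finite union of products $U\times V$ of regular $U\subseteq\Sigma^*$, $V\subseteq\Gamma^*$. A position $i$ of $w$ is $\geq k$-lagged if the absolute difference between the numbers of $\Sigma$-letters and $\Gamma$-letters in $w[1..i]$ is at least $k$. A shift of $w$ is a position $i\in\{1,\dots,|w|-1\}$ with exactly one of $w[i],w[i+1]$ in $\Sigma$; shifts $i<j$ are consecutive if no shift lies strictly between them. $\mathit{shiftlag}(w)$ is the maximal $n$ such that $w$ contains $n$ consecutive shifts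 all $\geq n$-lagged; a language has finite shiftlag if the supremum over its words is finite. *)

theory Defs
  imports Main "HOL-Library.Nat_Bijection"
begin

datatype recf = Zf | Sf | Idf nat | Cnf recf "recf list" | Prf recf recf | Mnf recf

inductive reval :: "recf \<Rightarrow> nat list \<Rightarrow> nat \<Rightarrow> bool" where
  zero: "reval Zf xs 0"
| suc: "reval Sf (x # xs) (Suc x)"
| proj: "i < length xs \<Longrightarrow> reval (Idf i) xs (xs ! i)"
| comp: "length gs = length ys \<Longrightarrow> (\<forall>k < length gs. reval (gs ! k) xs (ys ! k))
          \<Longrightarrow> reval f ys z \<Longrightarrow> reval (Cnf f gs) xs z"
| pr0: "reval f xs y \<Longrightarrow> reval (Prf f g) (0 # xs) y"
| prS: "reval (Prf f g) (n # xs) y \<Longrightarrow> reval g (y # n # xs) z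
          \<Longrightarrow> reval (Prf f g) (Suc n # xs) z"
| mn: "reval f (n # xs) 0 \<Longrightarrow> (\<forall>m < n. \<exists>y. y \<noteq> 0 \<and> reval f (m # xs) y)
          \<Longrightarrow> reval (Mnf f) xs n"

definition computable :: "(nat \<Rightarrow> nat) \<Rightarrow> bool" where
  "computable F \<longleftrightarrow> (\<exists>r. \<forall>n. reval r [n] (F n))"

type_synonym 'c nfa = "nat list \<times> (nat \<times> 'c \<times> nat) list \<times> nat list"

fun nfa_init :: "'c nfa \<Rightarrow> nat set" where "nfa_init (I, D, F) = set I"
fun nfa_trans :: "'c nfa \<Rightarrow> (nat \<times> 'c \<times> nat) set" where "nfa_trans (I, D, F) = set D"
fun nfa_final :: "'c nfa \<Rightarrow> nat set" where "nfa_final (I, D, F) = set F"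

fun reach :: "'c nfa \<Rightarrow> nat \<Rightarrow> 'c list \<Rightarrow> nat \<Rightarrow> bool" where
  "reach A p [] q \<longleftrightarrow> p = q"
| "reach A p (c # w) q \<longleftrightarrow> (\<exists>p'. (p, c, p') \<in> nfa_trans A \<and> reach A p' w q)"

definition lang :: "'c nfa \<Rightarrow> 'c list set" where
  "lang A = {w. \<exists>p\<in>nfa_init A. \<exists>q\<in>nfa_final A. reach A p w q}"

definition regular :: "'c list set \<Rightarrow> bool" where
  "regular L \<longleftrightarrow> (\<exists>A. lang A = L)"

definition letter_idx :: "'c::enum \<Rightarrow> nat" where
  "letter_idx c = length (takeWhile (\<lambda>x. x \<noteq> c) (enum_class.enum :: 'c list))"

fun enc_nfa :: "'c::enum nfa \<Rightarrow> nat" where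
  "enc_nfa (I, D, F) = prod_encode (list_encode I,
     prod_encode (list_encode (map (\<lambda>(p, c, q). prod_encode (p, prod_encode (letter_idx c, q))) D),
                  list_encode F))"

definition enc_pair :: "'c::enum nfa \<Rightarrow> 'c nfa \<Rightarrow> nat" where
  "enc_pair A B = prod_encode (enc_nfa A, enc_nfa B)"

definition pi_i :: "('s + 'g) list \<Rightarrow> 's list" where
  "pi_i w = map projl (filter isl w)"

definition pi_o :: "('s + 'g) list \<Rightarrow> 'g list" where
  "pi_o w = map projr (filter (\<lambda>x. \<not> isl x) w)"

definition sem :: "('s + 'g) list \<Rightarrow> 's list \<times> 'g list" where
  "sem w = (pi_i w, pi_o w)"

definition semL :: "('s + 'g) list set \<Rightarrow> ('s list \<times> 'g list) set" where
  "semL L = sem ` L"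

definition Rel :: "('s + 'g) list set \<Rightarrow> ('s list \<times> 'g list) set set" where
  "Rel T = {semL T' | T'. T' \<subseteq> T \<and> regular T'}"

definition sync_words :: "('s + 'g) list set" where
  "sync_words = {concat (map (\<lambda>(a, b). [Inl a, Inr b]) u) @ v | u v.
                   v \<in> lists (range Inl) \<or> v \<in> lists (range Inr)}"

definition recognizable :: "('s list \<times> 'g list) set \<Rightarrow> bool" where
  "recognizable R \<longleftrightarrow> (\<exists>ps :: ('s list set \<times> 'g list set) list.
      (\<forall>(U, V) \<in> set ps. regular U \<and> regular V) \<and> R = (\<Union>(U, V) \<in> set ps. U \<times> V))"

text \<open>Positions are 1-based: position i refers to w ! (i - 1).\<close>
definition lag :: "('s + 'g) list \<Rightarrow> nat \<Rightarrow> nat" where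
  "lag w i = nat \<bar>int (length (filter isl (take i w))) - int (length (filter (\<lambda>x. \<not> isl x) (take i w)))\<bar>"

definition is_shift :: "('s + 'g) list \<Rightarrow> nat \<Rightarrow> bool" where
  "is_shift w i \<longleftrightarrow> 1 \<le> i \<and> i \<le> length w - 1 \<and> isl (w ! (i - 1)) \<noteq> isl (w ! i)"

definition has_consec_lagged_shifts :: "('s + 'g) list \<Rightarrow> nat \<Rightarrow> bool" where
  "has_consec_lagged_shifts w n \<longleftrightarrow> (\<exists>is :: nat list. length is = n \<and> sorted_wrt (<) is \<and>
      (\<forall>i \<in> set is. is_shift w i \<and> lag w i \<ge> n) \<and>
      (\<forall>k. Suc k < length is \<longrightarrow> \<not> (\<exists>j. is ! k < j \<and> j < is ! Suc k \<and> is_shift w j)))"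

definition shiftlag :: "('s + 'g) list \<Rightarrow> nat" where
  "shiftlag w = (GREATEST n. has_consec_lagged_shifts w n)"

definition finite_shiftlag :: "('s + 'g) list set \<Rightarrow> bool" where
  "finite_shiftlag L \<longleftrightarrow> (\<exists>B. \<forall>w \<in> L. shiftlag w \<le> B)"

end

theory Submission
  imports Defs "HOL-Library.Cardinality"
begin

text \<open>
  A synchronous word is determined by its semantics, so the synchronous words outside
  \<open>A\<^sub>2\<close> form a regular language \<open>S\<close> with \<open>\<lbrakk>S\<rbrakk>\<close> the complement of \<open>R\<^sub>2\<close>. Let \<open>T\<close> consist
  of all words in \<open>\<Sigma>\<^sup>*\<Gamma>\<^sup>*\<close> together with the synchronous words in neither \<open>A\<^sub>1\<close> nor \<open>A\<^sub>2\<close>.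
  If \<open>T' \<subseteq> T\<close> is regular with \<open>\<lbrakk>T'\<rbrakk> = \<lbrakk>S\<rbrakk>\<close>, then the \<open>\<Sigma>\<^sup>*\<Gamma>\<^sup>*\<close>-part of \<open>T'\<close> has a
  recognizable semantics (cut an automaton at the state reached between the two blocks);
  it avoids \<open>R\<^sub>2\<close>, and it contains \<open>R\<^sub>1\<close> because the synchronous words of \<open>A\<^sub>1\<close> are not in \<open>T\<close>.
  Conversely a recognizable separator \<open>\<Union> U\<^sub>i \<times> V\<^sub>i\<close> yields
  \<open>T' = \<Union> U\<^sub>i V\<^sub>i \<union> (synchronous words outside A\<^sub>1 \<union> A\<^sub>2)\<close>.
  Synchronous words and words in \<open>\<Sigma>\<^sup>*\<Gamma>\<^sup>*\<close> have shiftlag at most 1.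

  Effectivity: automata for \<open>S\<close> and \<open>T\<close> are products of the subset automata of \<open>A\<^sub>1\<close>, \<open>A\<^sub>2\<close>
  (state sets as bit masks below \<open>2\<^sup>n\<close>, \<open>n\<close> the input code) with two fixed small automata
  recognising synchronous words and \<open>\<Sigma>\<^sup>*\<Gamma>\<^sup>*\<close>. Their codes are obtained from \<open>n\<close> by bounded
  sums and primitive recursion, hence computably.
\<close>

abbreviation all_Inl :: "('s + 'g) list \<Rightarrow> bool" where "all_Inl w \<equiv> (\<forall>x\<in>set w. isl x)"
abbreviation all_Inr :: "('s + 'g) list \<Rightarrow> bool" where "all_Inr w \<equiv> (\<forall>x\<in>set w. \<not> isl x)"

fun is_sync :: "('s + 'g) list \<Rightarrow> bool" where
  "is_sync [] = True"
| "is_sync (Inl a # Inr b # w) = is_sync w"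
| "is_sync w = (all_Inl w \<or> all_Inr w)"

fun is_split :: "('s + 'g) list \<Rightarrow> bool" where
  "is_split [] = True"
| "is_split (Inl a # w) = is_split w"
| "is_split (Inr b # w) = all_Inr w"

lemma is_sync_Inl: "is_sync (Inl a # w) \<longleftrightarrow> all_Inl w \<or> (\<exists>b w'. w = Inr b # w' \<and> is_sync w')"
proof (cases w)
  case (Cons x w')
  then show ?thesis by (cases x) auto
qed simp

lemma is_sync_if_all_Inl_or_Inr: "all_Inl w \<or> all_Inr w \<Longrightarrow> is_sync w"
  by (induction w rule: is_sync.induct) auto

lemma all_Inl_map_projl: "all_Inl w \<Longrightarrow> map Inl (map projl w) = w"
  by (induction w) (simp_all add: sum.collapse)

lemma all_Inr_map_projr: "all_Inr w \<Longrightarrow> map Inr (map projr w) = w"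
  by (induction w) (simp_all add: sum.collapse)

lemma is_split_iff: "is_split w \<longleftrightarrow> (\<exists>u v. w = map Inl u @ map Inr v)"
proof (induction w rule: is_split.induct)
  case (2 a w)
  have "(\<exists>u v. Inl a # w = map Inl u @ map Inr v) \<longleftrightarrow> (\<exists>u v. w = map Inl u @ map Inr v)"
  proof
    assume "\<exists>u v. Inl a # w = map Inl u @ map Inr v"
    then obtain u v where e: "Inl a # w = map Inl u @ map Inr v" by blast
    then obtain u' where "u = a # u'" by (cases u) auto
    then show "\<exists>u v. w = map Inl u @ map Inr v" using e by auto
  next
    assume "\<exists>u v. w = map Inl u @ map Inr v"
    then obtain u v where "w = map Inl u @ map Inr v" by blast
    then show "\<exists>u v. Inl a # w = map Inl u @ map Inr v" by (intro exI[of _ "a # u"] exI[of _ v]) simp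
  qed
  then show ?case using 2 by simp
next
  case (3 b w)
  have "(\<exists>u v. Inr b # w = map Inl u @ map Inr v) \<longleftrightarrow> all_Inr w"
  proof
    assume "\<exists>u v. Inr b # w = map Inl u @ map Inr v"
    then obtain u v where e: "Inr b # w = map Inl u @ map Inr v" by blast
    then have "u = []" by (cases u) auto
    then show "all_Inr w" using e by auto
  next
    assume "all_Inr w"
    then have "Inr b # w = map Inl [] @ map Inr (b # map projr w)" using all_Inr_map_projr[of w] by simp
    then show "\<exists>u v. Inr b # w = map Inl u @ map Inr v" by blast
  qed
  then show ?case by simp
qed simp

lemma pi_simps[simp]:
  "pi_i [] = []" "pi_o [] = []"
  "pi_i (Inl a # w) = a # pi_i w" "pi_o (Inl a # w) = pi_o w"
  "pi_i (Inr b # w) = pi_i w" "pi_o (Inr b # w) = b # pi_o w"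
  by (simp_all add: pi_i_def pi_o_def)

lemma pi_append[simp]: "pi_i (u @ v) = pi_i u @ pi_i v" "pi_o (u @ v) = pi_o u @ pi_o v"
  by (simp_all add: pi_i_def pi_o_def)

lemma pi_map_Inl[simp]: "pi_i (map Inl u) = u" "pi_o (map Inl u) = []"
  by (induction u) auto

lemma pi_map_Inr[simp]: "pi_i (map Inr u) = []" "pi_o (map Inr u) = u"
  by (induction u) auto

lemma sem_split_word[simp]: "sem (map Inl u @ map Inr v) = (u, v)"
  by (simp add: sem_def)

fun sync_of :: "'s list \<Rightarrow> 'g list \<Rightarrow> ('s + 'g) list" where
  "sync_of (a # u) (b # v) = Inl a # Inr b # sync_of u v"
| "sync_of u [] = map Inl u"
| "sync_of [] v = map Inr v"

lemma sync_of_Nil: "sync_of [] v = map Inr v"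
  by (cases v) auto

lemma sem_sync_of[simp]: "sem (sync_of u v) = (u, v)"
  by (induction u v rule: sync_of.induct) (auto simp: sem_def)

lemma is_sync_sync_of: "is_sync (sync_of u v)"
  by (induction u v rule: sync_of.induct) (auto simp: is_sync_if_all_Inl_or_Inr)

lemma sync_of_pi_if_all_Inl_or_Inr: "all_Inl w \<or> all_Inr w \<Longrightarrow> sync_of (pi_i w) (pi_o w) = w"
proof (elim disjE)
  assume "all_Inl w"
  then show ?thesis using all_Inl_map_projl[of w] by (simp add: pi_i_def pi_o_def)
next
  assume w: "all_Inr w"
  then have "pi_i w = []" "pi_o w = map projr w" by (simp_all add: pi_i_def pi_o_def filter_id_conv)
  then show ?thesis using all_Inr_map_projr[OF w] by (simp add: sync_of_Nil)
qed

lemma sync_of_pi: "is_sync w \<Longrightarrow> sync_of (pi_i w) (pi_o w) = w"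
  by (induction w rule: is_sync.induct) (simp_all only: is_sync.simps sync_of_pi_if_all_Inl_or_Inr, simp_all)

lemma sem_inj_on_sync: "is_sync w \<Longrightarrow> is_sync w' \<Longrightarrow> sem w = sem w' \<Longrightarrow> w = w'"
  by (metis sem_def sync_of_pi prod.inject)

lemma sync_of_in_sync_words: "sync_of u v \<in> sync_words"
proof (induction u v rule: sync_of.induct)
  case (1 a u b v)
  then obtain u' v' where "sync_of u v = concat (map (\<lambda>(a, b). [Inl a, Inr b]) u') @ v'"
      "v' \<in> lists (range Inl) \<or> v' \<in> lists (range Inr)"
      unfolding sync_words_def by auto
  then show ?case unfolding sync_words_def
    by (intro CollectI exI[of _ "(a, b) # u'"] exI[of _ v']) auto
next
  case (2 u)
  then show ?case unfolding sync_words_def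
    by (intro CollectI exI[of _ "[]"] exI[of _ "map Inl u"]) auto
next
  case (3 b v)
  then show ?case unfolding sync_words_def
    by (intro CollectI exI[of _ "[]"] exI[of _ "map Inr (b # v)"]) auto
qed

lemma is_sync_iff_sync_words: "is_sync w \<longleftrightarrow> w \<in> sync_words"
proof
  assume "is_sync w"
  then show "w \<in> sync_words" using sync_of_in_sync_words sync_of_pi by metis
next
  assume "w \<in> sync_words"
  then obtain u v where w: "w = concat (map (\<lambda>(a, b). [Inl a, Inr b]) u) @ v"
      and v: "v \<in> lists (range Inl) \<or> v \<in> lists (range Inr)"
    unfolding sync_words_def by auto
  have "is_sync v" using v by (intro is_sync_if_all_Inl_or_Inr) auto
  then show "is_sync w" unfolding w by (induction u) auto
qed

lemma no_shift_if_all_Inl_or_Inr: "all_Inl w \<or> all_Inr w \<Longrightarrow> \<not> is_shift w i"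
proof
  assume a: "all_Inl w \<or> all_Inr w" and sh: "is_shift w i"
  then have "w ! i \<in> set w" "w ! (i - 1) \<in> set w" by (auto simp: is_shift_def)
  then show False using a sh unfolding is_shift_def by auto
qed

lemma lag_shift_Inl_Inr_Cons:
  assumes IH: "\<And>i. is_shift w i \<Longrightarrow> lag w i \<le> 1" and sh: "is_shift (Inl a # Inr b # w) i"
  shows "lag (Inl a # Inr b # w) i \<le> 1"
proof (cases "i \<le> 2")
  case True
  then have "i = 1 \<or> i = 2" using sh by (auto simp: is_shift_def)
  then show ?thesis by (auto simp: lag_def)
next
  case False
  define j where "j = i - 2"
  have j: "i = j + 2" "1 \<le> j" using False j_def by auto
  have "is_shift w j" using sh j unfolding is_shift_def
    by (auto simp: nth_Cons split: nat.splits)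
  moreover have "lag (Inl a # Inr b # w) i = lag w j" using j by (simp add: lag_def)
  ultimately show ?thesis using IH by simp
qed

lemma lag_shift_sync: "is_sync w \<Longrightarrow> is_shift w i \<Longrightarrow> lag w i \<le> 1"
proof (induction w arbitrary: i rule: is_sync.induct)
  case 1
  then show ?case by (simp add: is_shift_def)
next
  case (2 a b w)
  then show ?case by (intro lag_shift_Inl_Inr_Cons) auto
qed (simp_all only: is_sync.simps, (metis no_shift_if_all_Inl_or_Inr)+)

lemma shift_split_word: "is_shift (map Inl u @ map Inr v) i \<Longrightarrow> i = length u"
proof (rule ccontr)
  assume sh: "is_shift (map Inl u @ map Inr v) i" and ne: "i \<noteq> length u"
  let ?w = "map Inl u @ map Inr v"
  have i: "1 \<le> i" "i < length ?w" using sh by (auto simp: is_shift_def)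
  show False
  proof (cases "i < length u")
    case True
    then have "?w ! i = Inl (u ! i)" "?w ! (i - 1) = Inl (u ! (i - 1))" by (auto simp: nth_append)
    then show False using sh by (auto simp: is_shift_def)
  next
    case False
    then have lu: "length u < i" using ne by simp
    moreover have "i - length u < length v" using i lu by simp
    ultimately have "?w ! i = Inr (v ! (i - length u))" "?w ! (i - 1) = Inr (v ! (i - 1 - length u))"
      by (auto simp: nth_append)
    then show False using sh by (auto simp: is_shift_def)
  qed
qed

lemma shiftlag_le_1I:
  assumes "\<And>n. has_consec_lagged_shifts w n \<Longrightarrow> n \<le> 1"
  shows "shiftlag w \<le> 1"
proof -
  have "has_consec_lagged_shifts w 0" unfolding has_consec_lagged_shifts_def
    by (intro exI[of _ "[]"]) simp
  then have "has_consec_lagged_shifts w (shiftlag w)" unfolding shiftlag_def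
    using assms by (rule GreatestI_nat)
  then show ?thesis using assms by blast
qed

lemma shiftlag_sync: "is_sync w \<Longrightarrow> shiftlag w \<le> 1"
proof (rule shiftlag_le_1I)
  fix n assume s: "is_sync w" and h: "has_consec_lagged_shifts w n"
  show "n \<le> 1"
  proof (rule ccontr)
    assume n: "\<not> n \<le> 1"
    from h obtain ks where l: "length ks = n" and sh: "\<forall>i\<in>set ks. is_shift w i \<and> lag w i \<ge> n"
      unfolding has_consec_lagged_shifts_def by blast
    have "ks ! 0 \<in> set ks" using l n by (intro nth_mem) simp
    then obtain i where "is_shift w i" "lag w i \<ge> n" using sh by blast
    then show False using lag_shift_sync[OF s] n by fastforce
  qed
qed

lemma shiftlag_split: "is_split w \<Longrightarrow> shiftlag w \<le> 1"
proof (rule shiftlag_le_1I)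
  fix n assume s: "is_split w" and h: "has_consec_lagged_shifts w n"
  then obtain u v where w: "w = map Inl u @ map Inr v" using is_split_iff by blast
  show "n \<le> 1"
  proof (rule ccontr)
    assume n: "\<not> n \<le> 1"
    from h obtain ks where l: "length ks = n" and so: "sorted_wrt (<) ks"
        and sh: "\<forall>i\<in>set ks. is_shift w i \<and> lag w i \<ge> n"
      unfolding has_consec_lagged_shifts_def by blast
    have "ks ! 0 < ks ! 1" using so l n by (simp add: sorted_wrt_iff_nth_less)
    moreover have "ks ! 0 \<in> set ks" "ks ! 1 \<in> set ks" using l n by (auto intro!: nth_mem)
    then have "ks ! 0 = length u" "ks ! 1 = length u" using sh shift_split_word w by blast+
    ultimately show False by simp
  qed
qed

lemma finite_shiftlagI: "(\<And>w. w \<in> L \<Longrightarrow> is_sync w \<or> is_split w) \<Longrightarrow> finite_shiftlag L"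
  unfolding finite_shiftlag_def using shiftlag_sync shiftlag_split by blast

section \<open>Closure properties of regular languages\<close>

lemma reach_append: "reach A p (u @ v) q \<longleftrightarrow> (\<exists>r. reach A p u r \<and> reach A r v q)"
  by (induction u arbitrary: p) auto

lemma regular_lang: "regular (lang A)"
  unfolding regular_def by blast

lemma regular_empty: "regular {}"
proof -
  have "lang (([], [], []) :: 'c nfa) = {}" by (simp add: lang_def)
  then show ?thesis unfolding regular_def by blast
qed

lemma langI: "p \<in> nfa_init A \<Longrightarrow> q \<in> nfa_final A \<Longrightarrow> reach A p w q \<Longrightarrow> w \<in> lang A"
  unfolding lang_def by blast

lemma langE:
  assumes "w \<in> lang A"
  obtains p q where "p \<in> nfa_init A" "q \<in> nfa_final A" "reach A p w q"
  using assms unfolding lang_def by blast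

lemma lang_triple: "lang (I, D, F) = {w. \<exists>p\<in>set I. \<exists>q\<in>set F. reach (I, D, F) p w q}"
  unfolding lang_def by simp

lemma reach_embed:
  assumes tr: "\<And>p c y. (f p, c, y) \<in> nfa_trans C \<longleftrightarrow> (\<exists>q. y = f q \<and> (p, c, q) \<in> nfa_trans A)"
  shows "reach C (f p) w x \<longleftrightarrow> (\<exists>q. x = f q \<and> reach A p w q)"
proof (induction w arbitrary: p)
  case (Cons c w)
  have "reach C (f p) (c # w) x \<longleftrightarrow> (\<exists>y. (f p, c, y) \<in> nfa_trans C \<and> reach C y w x)" by simp
  also have "\<dots> \<longleftrightarrow> (\<exists>q. (p, c, q) \<in> nfa_trans A \<and> reach C (f q) w x)" unfolding tr by blast
  also have "\<dots> \<longleftrightarrow> (\<exists>q. (p, c, q) \<in> nfa_trans A \<and> (\<exists>q'. x = f q' \<and> reach A q w q'))"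
    using Cons.IH by simp
  also have "\<dots> \<longleftrightarrow> (\<exists>q'. x = f q' \<and> reach A p (c # w) q')" by auto
  finally show ?case .
qed auto

definition map_states :: "(nat \<Rightarrow> nat) \<Rightarrow> (nat \<Rightarrow> nat) \<Rightarrow> (nat \<times> 'c \<times> nat) list \<Rightarrow> (nat \<times> 'c \<times> nat) list" where
  "map_states f g D = map (\<lambda>(p, c, q). (f p, c, g q)) D"

lemma mem_map_states[simp]:
  "(x, c, y) \<in> set (map_states f g D) \<longleftrightarrow> (\<exists>p q. (p, c, q) \<in> set D \<and> x = f p \<and> y = g q)"
  unfolding map_states_def by (induction D) auto

lemma odd_neq_even[simp]: "Suc (2 * a) \<noteq> 2 * b" "2 * b \<noteq> Suc (2 * a)"
  by presburger+

fun union_nfa :: "'c nfa \<Rightarrow> 'c nfa \<Rightarrow> 'c nfa" where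
  "union_nfa (I1, D1, F1) (I2, D2, F2) =
     (map (\<lambda>p. 2 * p) I1 @ map (\<lambda>p. Suc (2 * p)) I2,
      map_states (\<lambda>p. 2 * p) (\<lambda>p. 2 * p) D1 @ map_states (\<lambda>p. Suc (2 * p)) (\<lambda>p. Suc (2 * p)) D2,
      map (\<lambda>p. 2 * p) F1 @ map (\<lambda>p. Suc (2 * p)) F2)"

lemma reach_union_nfa_even:
  "reach (union_nfa (I1, D1, F1) (I2, D2, F2)) (2 * p) w x \<longleftrightarrow> (\<exists>q. x = 2 * q \<and> reach (I1, D1, F1) p w q)"
  by (rule reach_embed) auto

lemma reach_union_nfa_odd:
  "reach (union_nfa (I1, D1, F1) (I2, D2, F2)) (Suc (2 * p)) w x \<longleftrightarrow> (\<exists>q. x = Suc (2 * q) \<and> reach (I2, D2, F2) p w q)"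
  by (rule reach_embed[where f = "\<lambda>p. Suc (2 * p)"]) auto

lemma lang_union_nfa: "lang (union_nfa A B) = lang A \<union> lang B"
proof -
  obtain I1 D1 F1 I2 D2 F2 where A: "A = (I1, D1, F1)" and B: "B = (I2, D2, F2)"
    by (cases A, cases B)
  let ?U = "union_nfa (I1, D1, F1) (I2, D2, F2)"
  show ?thesis
  proof (intro set_eqI iffI)
    fix w assume "w \<in> lang (union_nfa A B)"
    then obtain p x where p: "p \<in> nfa_init ?U" and x: "x \<in> nfa_final ?U" and r: "reach ?U p w x"
      unfolding A B by (rule langE)
    from p consider p' where "p = 2 * p'" "p' \<in> set I1" | p' where "p = Suc (2 * p')" "p' \<in> set I2"
      by auto
    then show "w \<in> lang A \<union> lang B"
    proof cases
      case 1
      then obtain q where q: "x = 2 * q" "reach (I1, D1, F1) p' w q" using r reach_union_nfa_even by blast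
      then have "q \<in> set F1" using x by auto
      then show ?thesis using 1 q(2) unfolding A lang_triple Un_iff by blast
    next
      case 2
      then obtain q where q: "x = Suc (2 * q)" "reach (I2, D2, F2) p' w q" using r reach_union_nfa_odd by blast
      then have "q \<in> set F2" using x by auto
      then show ?thesis using 2 q(2) unfolding B lang_triple Un_iff by blast
    qed
  next
    fix w assume "w \<in> lang A \<union> lang B"
    then consider p q where "p \<in> set I1" "q \<in> set F1" "reach (I1, D1, F1) p w q"
      | p q where "p \<in> set I2" "q \<in> set F2" "reach (I2, D2, F2) p w q"
      unfolding A B lang_triple by blast
    then show "w \<in> lang (union_nfa A B)"
    proof cases
      case 1
      then have "reach ?U (2 * p) w (2 * q)" using reach_union_nfa_even by blast
      then show ?thesis unfolding A B by (rule langI[rotated 2]) (use 1 in auto)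
    next
      case 2
      then have "reach ?U (Suc (2 * p)) w (Suc (2 * q))" using reach_union_nfa_odd by blast
      then show ?thesis unfolding A B by (rule langI[rotated 2]) (use 2 in auto)
    qed
  qed
qed

lemma regular_Un: "regular L1 \<Longrightarrow> regular L2 \<Longrightarrow> regular (L1 \<union> L2)"
  unfolding regular_def using lang_union_nfa by metis

text \<open>A final state \<open>p\<close> of the first automaton also acts as each initial state of the second one,
  by inheriting its outgoing transitions.\<close>

fun conc_nfa :: "'c nfa \<Rightarrow> 'c nfa \<Rightarrow> 'c nfa" where
  "conc_nfa (I1, D1, F1) (I2, D2, F2) =
     (map (\<lambda>p. 2 * p) I1,
      map_states (\<lambda>p. 2 * p) (\<lambda>p. 2 * p) D1 @ map_states (\<lambda>p. Suc (2 * p)) (\<lambda>p. Suc (2 * p)) D2 @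
      concat (map (\<lambda>p. map_states (\<lambda>_. 2 * p) (\<lambda>q'. Suc (2 * q')) (filter (\<lambda>(q, c, q'). q \<in> set I2) D2)) F1),
      map (\<lambda>p. Suc (2 * p)) F2 @ (if \<exists>q\<in>set I2. q \<in> set F2 then map (\<lambda>p. 2 * p) F1 else []))"

lemma reach_conc_nfa_odd:
  "reach (conc_nfa (I1, D1, F1) (I2, D2, F2)) (Suc (2 * p)) w x \<longleftrightarrow> (\<exists>q. x = Suc (2 * q) \<and> reach (I2, D2, F2) p w q)"
  by (rule reach_embed[where f = "\<lambda>p. Suc (2 * p)"]) auto

lemma trans_conc_nfa_even:
  "(2 * p, c, y) \<in> nfa_trans (conc_nfa (I1, D1, F1) (I2, D2, F2)) \<longleftrightarrow>
     (\<exists>q. y = 2 * q \<and> (p, c, q) \<in> set D1) \<or>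
     (\<exists>q0 q1. p \<in> set F1 \<and> q0 \<in> set I2 \<and> (q0, c, q1) \<in> set D2 \<and> y = Suc (2 * q1))"
  by auto

lemma reach_conc_nfa_even_even:
  "reach (I1, D1, F1) p u p' \<Longrightarrow> reach (conc_nfa (I1, D1, F1) (I2, D2, F2)) (2 * p) u (2 * p')"
proof (induction u arbitrary: p)
  case (Cons c u)
  then obtain q where q: "(p, c, q) \<in> set D1" "reach (I1, D1, F1) q u p'" by auto
  then have "(2 * p, c, 2 * q) \<in> nfa_trans (conc_nfa (I1, D1, F1) (I2, D2, F2))"
    unfolding trans_conc_nfa_even by blast
  then show ?case using Cons.IH[OF q(2)] by (simp only: reach.simps) blast
qed simp

lemma reach_conc_nfa_even_odd:
  assumes "reach (I1, D1, F1) p u p'" "p' \<in> set F1" "q0 \<in> set I2" "reach (I2, D2, F2) q0 (c # v) q'"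
  shows "reach (conc_nfa (I1, D1, F1) (I2, D2, F2)) (2 * p) (u @ c # v) (Suc (2 * q'))"
proof -
  let ?C = "conc_nfa (I1, D1, F1) (I2, D2, F2)"
  obtain q1 where q1: "(q0, c, q1) \<in> set D2" "reach (I2, D2, F2) q1 v q'" using assms(4) by auto
  then have "(2 * p', c, Suc (2 * q1)) \<in> nfa_trans ?C"
    unfolding trans_conc_nfa_even using assms(2,3) by blast
  moreover have "reach ?C (Suc (2 * q1)) v (Suc (2 * q'))" using q1(2) reach_conc_nfa_odd by blast
  ultimately have "reach ?C (2 * p') (c # v) (Suc (2 * q'))" by (simp only: reach.simps) blast
  then show ?thesis using reach_conc_nfa_even_even[OF assms(1)] unfolding reach_append by blast
qed

lemma reach_conc_nfa_evenE:
  assumes "reach (conc_nfa (I1, D1, F1) (I2, D2, F2)) (2 * p) w x"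
  obtains q where "x = 2 * q" "reach (I1, D1, F1) p w q"
  | u c v p' q0 q' where "w = u @ c # v" "reach (I1, D1, F1) p u p'" "p' \<in> set F1" "q0 \<in> set I2"
      "reach (I2, D2, F2) q0 (c # v) q'" "x = Suc (2 * q')"
  using assms
proof (induction w arbitrary: p thesis)
  case (Cons c w)
  let ?C = "conc_nfa (I1, D1, F1) (I2, D2, F2)"
  obtain y where y: "(2 * p, c, y) \<in> nfa_trans ?C" "reach ?C y w x"
    using Cons.prems(3) by (simp only: reach.simps) blast
  then consider (left) q where "y = 2 * q" "(p, c, q) \<in> set D1"
    | (cross) q0 q1 where "p \<in> set F1" "q0 \<in> set I2" "(q0, c, q1) \<in> set D2" "y = Suc (2 * q1)"
    unfolding trans_conc_nfa_even by blast
  then show ?case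
  proof cases
    case left
    show ?thesis
    proof (rule Cons.IH)
      show "reach ?C (2 * q) w x" using y left by simp
      show "x = 2 * q' \<Longrightarrow> reach (I1, D1, F1) q w q' \<Longrightarrow> thesis" for q'
        using Cons.prems(1)[of q'] left by auto
      show "thesis" if "w = u @ c' # v" "reach (I1, D1, F1) q u p'" "p' \<in> set F1" "q0 \<in> set I2"
        "reach (I2, D2, F2) q0 (c' # v) q'" "x = Suc (2 * q')" for u c' v p' q0 q'
      proof -
        have "reach (I1, D1, F1) p (c # u) p'" using that(2) left(2) by auto
        then show thesis using Cons.prems(2)[of "c # u" c' v p' q0 q'] that by simp
      qed
    qed
  next
    case cross
    then obtain q' where "x = Suc (2 * q')" "reach (I2, D2, F2) q1 w q'"
      using y reach_conc_nfa_odd by blast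
    moreover from this have "reach (I2, D2, F2) q0 (c # w) q'" using cross(3) by auto
    ultimately show ?thesis using Cons.prems(2)[of "[]" c w p q0 q'] cross by simp
  qed
qed simp

lemma lang_conc_nfaD:
  assumes "w \<in> lang (conc_nfa (I1, D1, F1) (I2, D2, F2))"
  shows "\<exists>u v. w = u @ v \<and> u \<in> lang (I1, D1, F1) \<and> v \<in> lang (I2, D2, F2)"
proof -
  let ?C = "conc_nfa (I1, D1, F1) (I2, D2, F2)"
  obtain p0 x where p0: "p0 \<in> nfa_init ?C" and x: "x \<in> nfa_final ?C" and r: "reach ?C p0 w x"
    using assms by (rule langE)
  from p0 obtain p where p: "p \<in> set I1" "p0 = 2 * p" by auto
  from r[unfolded p(2)] show ?thesis
  proof (cases rule: reach_conc_nfa_evenE)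
    case (1 q)
    then have "q \<in> set F1" "\<exists>q\<in>set I2. q \<in> set F2" using x by auto
    then have "w \<in> lang (I1, D1, F1)" "[] \<in> lang (I2, D2, F2)" using p 1 unfolding lang_triple by auto
    then show ?thesis by force
  next
    case (2 u c v p' q0 q')
    then have "q' \<in> set F2" using x by auto
    then have "u \<in> lang (I1, D1, F1)" "c # v \<in> lang (I2, D2, F2)" using p 2 unfolding lang_triple by blast+
    then show ?thesis using 2 by blast
  qed
qed

lemma append_in_lang_conc_nfa:
  assumes "u \<in> lang (I1, D1, F1)" "v \<in> lang (I2, D2, F2)"
  shows "u @ v \<in> lang (conc_nfa (I1, D1, F1) (I2, D2, F2))"
proof -
  let ?C = "conc_nfa (I1, D1, F1) (I2, D2, F2)"
  obtain p p' q0 q' where p: "p \<in> set I1" "p' \<in> set F1" "reach (I1, D1, F1) p u p'"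
      and q: "q0 \<in> set I2" "q' \<in> set F2" "reach (I2, D2, F2) q0 v q'"
    using assms unfolding lang_triple by blast
  have init: "2 * p \<in> nfa_init ?C" using p by simp
  show ?thesis
  proof (cases v)
    case Nil
    have "reach ?C (2 * p) (u @ v) (2 * p')" using reach_conc_nfa_even_even[OF p(3)] Nil by simp
    moreover have "2 * p' \<in> nfa_final ?C" using p q Nil by auto
    ultimately show ?thesis using init by (blast intro: langI)
  next
    case (Cons c v')
    have "reach ?C (2 * p) (u @ v) (Suc (2 * q'))"
      using reach_conc_nfa_even_odd[OF p(3,2) q(1)] q(3) Cons by simp
    moreover have "Suc (2 * q') \<in> nfa_final ?C" using q by simp
    ultimately show ?thesis using init by (blast intro: langI)
  qed
qed

lemma lang_conc_nfa: "lang (conc_nfa A B) = {u @ v | u v. u \<in> lang A \<and> v \<in> lang B}"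
proof -
  obtain I1 D1 F1 I2 D2 F2 where "A = (I1, D1, F1)" and "B = (I2, D2, F2)"
    by (cases A, cases B)
  then show ?thesis
    by (intro set_eqI iffI) (blast dest: lang_conc_nfaD intro: append_in_lang_conc_nfa)+
qed

lemma regular_conc: "regular L1 \<Longrightarrow> regular L2 \<Longrightarrow> regular {u @ v | u v. u \<in> L1 \<and> v \<in> L2}"
  unfolding regular_def using lang_conc_nfa by blast

definition map_letters :: "('c \<Rightarrow> 'd) \<Rightarrow> (nat \<times> 'c \<times> nat) list \<Rightarrow> (nat \<times> 'd \<times> nat) list" where
  "map_letters f D = map (\<lambda>(p, c, q). (p, f c, q)) D"

lemma mem_map_letters[simp]: "(x, c, y) \<in> set (map_letters f D) \<longleftrightarrow> (\<exists>a. (x, a, y) \<in> set D \<and> c = f a)"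
  unfolding map_letters_def by (induction D) auto

lemma reach_map_letters: "reach (I, map_letters f D, F) p w q \<longleftrightarrow> (\<exists>u. w = map f u \<and> reach (I, D, F) p u q)"
proof (induction w arbitrary: p)
  case (Cons c w)
  show ?case
  proof
    assume "reach (I, map_letters f D, F) p (c # w) q"
    then obtain p' a u where "(p, a, p') \<in> set D" "c = f a" "w = map f u" "reach (I, D, F) p' u q"
      using Cons.IH by auto
    then show "\<exists>u. c # w = map f u \<and> reach (I, D, F) p u q" by (intro exI[of _ "a # u"]) auto
  next
    assume "\<exists>u. c # w = map f u \<and> reach (I, D, F) p u q"
    then obtain a u p' where "c = f a" "w = map f u" "(p, a, p') \<in> set D" "reach (I, D, F) p' u q"
      by (auto simp: Cons_eq_map_conv)
    then show "reach (I, map_letters f D, F) p (c # w) q" using Cons.IH by auto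
  qed
qed auto

lemma lang_map_letters: "lang (I, map_letters f D, F) = map f ` lang (I, D, F)"
proof (intro set_eqI iffI)
  fix w assume "w \<in> lang (I, map_letters f D, F)"
  then obtain p q u where "p \<in> set I" "q \<in> set F" "w = map f u" "reach (I, D, F) p u q"
    unfolding lang_triple reach_map_letters by blast
  then show "w \<in> map f ` lang (I, D, F)" unfolding lang_triple by blast
next
  fix w assume "w \<in> map f ` lang (I, D, F)"
  then obtain p q u where "p \<in> set I" "q \<in> set F" "w = map f u" "reach (I, D, F) p u q"
    unfolding lang_triple by blast
  then show "w \<in> lang (I, map_letters f D, F)" unfolding lang_triple reach_map_letters by blast
qed

lemma regular_map: "regular L \<Longrightarrow> regular (map f ` L)"
proof -
  assume "regular L"
  then obtain A where A: "lang A = L" unfolding regular_def by blast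
  obtain I D F where "A = (I, D, F)" by (cases A)
  then have "lang (I, map_letters f D, F) = map f ` L" using A by (simp add: lang_map_letters)
  then show ?thesis unfolding regular_def by blast
qed

section \<open>Separability and the class \<open>Rel\<close>\<close>

definition split_lang :: "'s list set \<Rightarrow> 'g list set \<Rightarrow> ('s + 'g) list set" where
  "split_lang U V = {map Inl u @ map Inr v | u v. u \<in> U \<and> v \<in> V}"

lemma regular_split_lang: "regular U \<Longrightarrow> regular V \<Longrightarrow> regular (split_lang U V)"
proof -
  assume "regular U" "regular V"
  then have "regular {u @ v | u v. u \<in> map Inl ` U \<and> v \<in> map Inr ` V}"
    by (intro regular_conc regular_map)
  moreover have "{u @ v | u v. u \<in> map Inl ` U \<and> v \<in> map Inr ` V} = split_lang U V"
    unfolding split_lang_def by blast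
  ultimately show ?thesis by simp
qed

lemma semL_split_lang: "semL (split_lang U V) = U \<times> V"
proof (intro set_eqI iffI)
  fix x assume "x \<in> semL (split_lang U V)"
  then show "x \<in> U \<times> V" unfolding semL_def split_lang_def by auto
next
  fix x assume "x \<in> U \<times> V"
  then obtain u v where "x = (u, v)" "u \<in> U" "v \<in> V" by blast
  then show "x \<in> semL (split_lang U V)" unfolding semL_def split_lang_def
    by (intro image_eqI[where x = "map Inl u @ map Inr v"]) auto
qed

lemma semL_Un: "semL (A \<union> B) = semL A \<union> semL B"
  unfolding semL_def by (rule image_Un)

lemma regular_split_langs:
  "\<forall>(U, V)\<in>set ps. regular U \<and> regular V \<Longrightarrow> regular (\<Union>(U, V)\<in>set ps. split_lang U V)"
  by (induction ps) (auto simp: regular_empty regular_Un regular_split_lang)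

lemma semL_split_langs: "semL (\<Union>(U, V)\<in>set ps. split_lang U V) = (\<Union>(U, V)\<in>set ps. U \<times> V)"
  unfolding semL_def image_UN by (simp add: semL_split_lang[unfolded semL_def] split_beta)

lemma is_split_split_langs: "w \<in> (\<Union>(U, V)\<in>set ps. split_lang U V) \<Longrightarrow> is_split w"
  unfolding split_lang_def using is_split_iff by blast

definition Inl_trans :: "(nat \<times> ('s + 'g) \<times> nat) list \<Rightarrow> (nat \<times> 's \<times> nat) list" where
  "Inl_trans D = map (\<lambda>(p, c, q). (p, projl c, q)) (filter (\<lambda>(p, c, q). isl c) D)"

definition Inr_trans :: "(nat \<times> ('s + 'g) \<times> nat) list \<Rightarrow> (nat \<times> 'g \<times> nat) list" where
  "Inr_trans D = map (\<lambda>(p, c, q). (p, projr c, q)) (filter (\<lambda>(p, c, q). \<not> isl c) D)"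

lemma mem_Inl_trans: "(p, a, q) \<in> set (Inl_trans D) \<longleftrightarrow> (p, Inl a, q) \<in> set D"
  unfolding Inl_trans_def by (force simp: isl_def)

lemma mem_Inr_trans: "(p, b, q) \<in> set (Inr_trans D) \<longleftrightarrow> (p, Inr b, q) \<in> set D"
  unfolding Inr_trans_def by (force simp: isl_def)

lemma reach_Inl_trans: "reach (I', Inl_trans D, F') p u q \<longleftrightarrow> reach (I, D, F) p (map Inl u) q"
  by (induction u arbitrary: p) (auto simp: mem_Inl_trans)

lemma reach_Inr_trans: "reach (I', Inr_trans D, F') p v q \<longleftrightarrow> reach (I, D, F) p (map Inr v) q"
  by (induction v arbitrary: p) (auto simp: mem_Inr_trans)

definition states_of :: "'c nfa \<Rightarrow> nat list" where
  "states_of B = (case B of (I, D, F) \<Rightarrow> I @ map (\<lambda>(p, c, q). q) D)"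

lemma reach_states_of: "reach (I, D, F) p w q \<Longrightarrow> p \<in> set (states_of (I, D, F)) \<Longrightarrow> q \<in> set (states_of (I, D, F))"
proof (induction w arbitrary: p)
  case (Cons c w)
  then obtain p' where "(p, c, p') \<in> set D" "reach (I, D, F) p' w q" by auto
  moreover from this have "p' \<in> set (states_of (I, D, F))" unfolding states_of_def by force
  ultimately show ?case using Cons.IH by blast
qed simp

text \<open>An automaton reading \<open>map Inl u @ map Inr v\<close> passes through some state \<open>r\<close> between the
  two blocks; cutting it there exhibits its \<open>\<Sigma>\<^sup>*\<Gamma>\<^sup>*\<close>-part as a finite union of products.\<close>

definition left_factor :: "('s + 'g) nfa \<Rightarrow> nat \<Rightarrow> 's list set" where
  "left_factor B r = (case B of (I, D, F) \<Rightarrow> lang (I, Inl_trans D, [r]))"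

definition right_factor :: "('s + 'g) nfa \<Rightarrow> nat \<Rightarrow> 'g list set" where
  "right_factor B r = (case B of (I, D, F) \<Rightarrow> lang ([r], Inr_trans D, F))"

lemma split_word_in_lang_iff:
  fixes B :: "('s + 'g) nfa"
  shows "map Inl u @ map Inr v \<in> lang B \<longleftrightarrow> (\<exists>r\<in>set (states_of B). u \<in> left_factor B r \<and> v \<in> right_factor B r)"
proof -
  obtain I D F where B: "B = (I, D, F)" by (cases B)
  have states: "r \<in> set (states_of B)" if "p \<in> set I" "reach B p (map Inl u) r" for p r
    using reach_states_of[of I D F p _ r] that by (auto simp: B states_of_def)
  have left: "reach (I, Inl_trans D, [r]) p u r \<longleftrightarrow> reach B p (map Inl u) r" for p r
    unfolding B by (rule reach_Inl_trans)
  have right: "reach ([r], Inr_trans D, F) r v q \<longleftrightarrow> reach B r (map Inr v) q" for r q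
    unfolding B by (rule reach_Inr_trans)
  have "map Inl u @ map Inr v \<in> lang B \<longleftrightarrow>
      (\<exists>r. (\<exists>p\<in>set I. reach B p (map Inl u) r) \<and> (\<exists>q\<in>set F. reach B r (map Inr v) q))"
    unfolding B lang_def by (auto simp: reach_append)
  also have "\<dots> \<longleftrightarrow> (\<exists>r\<in>set (states_of B). u \<in> left_factor B r \<and> v \<in> right_factor B r)"
    using states unfolding left_factor_def right_factor_def lang_def B by (auto simp: left right B)
  finally show ?thesis .
qed

lemma recognizable_split_part:
  fixes B :: "('s + 'g) nfa"
  shows "recognizable (semL (lang B \<inter> {w. is_split w}))"
proof -
  let ?ps = "map (\<lambda>r. (left_factor B r, right_factor B r)) (states_of B)"
  have "semL (lang B \<inter> {w. is_split w}) = (\<Union>(U, V)\<in>set ?ps. U \<times> V)"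
  proof (intro set_eqI iffI)
    fix x assume "x \<in> semL (lang B \<inter> {w. is_split w})"
    then obtain u v where "map Inl u @ map Inr v \<in> lang B" "x = (u, v)"
      unfolding semL_def is_split_iff by auto
    then show "x \<in> (\<Union>(U, V)\<in>set ?ps. U \<times> V)" unfolding split_word_in_lang_iff by auto
  next
    fix x assume "x \<in> (\<Union>(U, V)\<in>set ?ps. U \<times> V)"
    then obtain u v where "map Inl u @ map Inr v \<in> lang B" "x = (u, v)"
      unfolding split_word_in_lang_iff by auto
    then show "x \<in> semL (lang B \<inter> {w. is_split w})"
      unfolding semL_def is_split_iff by (intro image_eqI[where x = "map Inl u @ map Inr v"]) auto
  qed
  moreover have "\<forall>(U, V)\<in>set ?ps. regular U \<and> regular V"
    by (cases B) (auto simp: left_factor_def right_factor_def regular_lang)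
  ultimately show ?thesis unfolding recognizable_def by blast
qed

lemma semL_sync_complement:
  assumes L: "\<forall>w\<in>L. is_sync (w :: ('s + 'g) list)"
  shows "semL {w. is_sync w \<and> w \<notin> L} = - semL L"
proof (intro set_eqI iffI)
  fix x assume "x \<in> semL {w. is_sync w \<and> w \<notin> L}"
  then obtain w where w: "is_sync w" "w \<notin> L" "x = sem w" unfolding semL_def by blast
  have "sem w' \<noteq> x" if "w' \<in> L" for w'
  proof
    assume "sem w' = x"
    then have "w' = w" using sem_inj_on_sync[of w' w] L that w(1,3) by blast
    then show False using that w(2) by simp
  qed
  then show "x \<in> - semL L" unfolding semL_def by blast
next
  fix x :: "'s list \<times> 'g list" assume x: "x \<in> - semL L"
  obtain u v where uv: "x = (u, v)" by (cases x)
  have "sync_of u v \<notin> L"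
  proof
    assume "sync_of u v \<in> L"
    then have "sem (sync_of u v) \<in> semL L" unfolding semL_def by (rule imageI)
    then show False using x uv by simp
  qed
  then show "x \<in> semL {w. is_sync w \<and> w \<notin> L}" unfolding semL_def using uv is_sync_sync_of
    by (intro image_eqI[where x = "sync_of u v"]) auto
qed

lemma Rel_if_separable:
  fixes L1 L2 :: "('s + 'g) list set"
  assumes sync: "\<forall>w\<in>L1 \<union> L2. is_sync w" and X: "regular {w. is_sync w \<and> w \<notin> L1 \<and> w \<notin> L2}"
    and R: "recognizable R" "semL L1 \<subseteq> R" "R \<inter> semL L2 = {}"
  shows "semL {w. is_sync w \<and> w \<notin> L2} \<in> Rel {w. is_split w \<or> (is_sync w \<and> w \<notin> L1 \<and> w \<notin> L2)}"
proof -
  let ?X = "{w. is_sync w \<and> w \<notin> L1 \<and> w \<notin> L2}"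
  obtain ps where ps: "\<forall>(U, V)\<in>set ps. regular U \<and> regular V" "R = (\<Union>(U, V)\<in>set ps. U \<times> V)"
    using R(1) unfolding recognizable_def by blast
  define T' where "T' = (\<Union>(U, V)\<in>set ps. split_lang U V) \<union> ?X"
  have S: "semL {w. is_sync w \<and> w \<notin> L2} = - semL L2" using sync by (intro semL_sync_complement) blast
  have X': "semL ?X = - (semL L1 \<union> semL L2)"
    using semL_sync_complement[OF sync] by (simp add: semL_Un)
  have "semL T' = R \<union> - (semL L1 \<union> semL L2)"
    unfolding T'_def semL_Un semL_split_langs X' ps(2) ..
  then have "semL T' = semL {w. is_sync w \<and> w \<notin> L2}" unfolding S using R(2,3) by blast
  moreover have "regular T'" unfolding T'_def by (intro regular_Un regular_split_langs ps X)
  moreover have "T' \<subseteq> {w. is_split w \<or> (is_sync w \<and> w \<notin> L1 \<and> w \<notin> L2)}"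
    unfolding T'_def using is_split_split_langs by auto
  ultimately show ?thesis unfolding Rel_def by blast
qed

lemma separable_if_Rel:
  fixes L1 L2 :: "('s + 'g) list set"
  assumes sync: "\<forall>w\<in>L1 \<union> L2. is_sync w" and disj: "semL L1 \<inter> semL L2 = {}"
    and Rel: "semL {w. is_sync w \<and> w \<notin> L2} \<in> Rel {w. is_split w \<or> (is_sync w \<and> w \<notin> L1 \<and> w \<notin> L2)}"
  shows "\<exists>R. recognizable R \<and> semL L1 \<subseteq> R \<and> R \<inter> semL L2 = {}"
proof -
  obtain B where B: "semL (lang B) = semL {w. is_sync w \<and> w \<notin> L2}"
      and T: "lang B \<subseteq> {w. is_split w \<or> (is_sync w \<and> w \<notin> L1 \<and> w \<notin> L2)}"
    using Rel unfolding Rel_def regular_def by blast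
  have B2: "semL (lang B) = - semL L2"
    unfolding B using sync by (intro semL_sync_complement) blast
  define R where "R = semL (lang B \<inter> {w. is_split w})"
  have "R \<subseteq> semL (lang B)" unfolding R_def semL_def by auto
  then have "R \<inter> semL L2 = {}" unfolding B2 by blast
  moreover have "semL L1 \<subseteq> R"
  proof
    fix x assume x: "x \<in> semL L1"
    then obtain w1 where w1: "w1 \<in> L1" "x = sem w1" unfolding semL_def by blast
    from x disj have "x \<in> semL (lang B)" unfolding B2 by blast
    then obtain w where w: "w \<in> lang B" "x = sem w" unfolding semL_def by blast
    have "is_sync w1" using sync w1(1) by blast
    then have "is_sync w \<Longrightarrow> w = w1" using sem_inj_on_sync[of w w1] w(2) w1(2) by simp
    txt \<open>A synchronous \<open>w\<close> would be \<open>w\<^sub>1 \<in> L\<^sub>1\<close>, which \<open>T\<close> excludes.\<close>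
    then have "is_split w" using T w(1) w1(1) by blast
    then have "w \<in> lang B \<inter> {w. is_split w}" using w(1) by simp
    then show "x \<in> R" unfolding R_def semL_def using w(2) by (rule rev_image_eqI)
  qed
  moreover have "recognizable R" unfolding R_def by (rule recognizable_split_part)
  ultimately show ?thesis by blast
qed

lemma separable_iff_Rel:
  fixes L1 L2 :: "('s + 'g) list set"
  assumes "\<forall>w\<in>L1 \<union> L2. is_sync w" "semL L1 \<inter> semL L2 = {}"
    and "regular {w. is_sync w \<and> w \<notin> L1 \<and> w \<notin> L2}"
  shows "(\<exists>R. recognizable R \<and> semL L1 \<subseteq> R \<and> R \<inter> semL L2 = {}) \<longleftrightarrow>
    semL {w. is_sync w \<and> w \<notin> L2} \<in> Rel {w. is_split w \<or> (is_sync w \<and> w \<notin> L1 \<and> w \<notin> L2)}"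
  using Rel_if_separable[OF assms(1,3)] separable_if_Rel[OF assms(1,2)] by blast

section \<open>Computable functions\<close>

definition computable_n :: "nat \<Rightarrow> (nat list \<Rightarrow> nat) \<Rightarrow> bool" where
  "computable_n k f \<longleftrightarrow> (\<exists>r. \<forall>xs. length xs = k \<longrightarrow> reval r xs (f xs))"

lemma reval_const: "reval (((\<lambda>r. Cnf Sf [r]) ^^ c) Zf) xs c"
proof (induction c)
  case 0 then show ?case by (simp add: reval.zero)
next
  case (Suc c)
  have "reval Sf [c] (Suc c)" using reval.suc[of c "[]"] by simp
  then show ?case using reval.comp[of "[((\<lambda>r. Cnf Sf [r]) ^^ c) Zf]" "[c]" xs Sf "Suc c"] Suc
    by simp
qed

named_theorems computable_n_intros

lemma computable_n_const[computable_n_intros]: "computable_n k (\<lambda>xs. c)"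
  unfolding computable_n_def using reval_const by blast

lemma computable_n_proj[computable_n_intros]: "i < k \<Longrightarrow> computable_n k (\<lambda>xs. xs ! i)"
  unfolding computable_n_def using reval.proj by blast

lemma computable_n_cong: "computable_n k f \<Longrightarrow> (\<And>xs. length xs = k \<Longrightarrow> f xs = g xs) \<Longrightarrow> computable_n k g"
  unfolding computable_n_def by metis

lemma computable_n_comp:
  assumes F: "computable_n m F" and len: "length gs = m" and G: "\<And>j. j < m \<Longrightarrow> computable_n k (gs ! j)"
  shows "computable_n k (\<lambda>xs. F (map (\<lambda>g. g xs) gs))"
proof -
  from G have "\<forall>j. \<exists>r. j < m \<longrightarrow> (\<forall>xs. length xs = k \<longrightarrow> reval r xs ((gs ! j) xs))"
    unfolding computable_n_def by blast
  then obtain R where R: "\<And>j xs. j < m \<Longrightarrow> length xs = k \<Longrightarrow> reval (R j) xs ((gs ! j) xs)"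
    by metis
  from F obtain rF where rF: "\<And>ys. length ys = m \<Longrightarrow> reval rF ys (F ys)" unfolding computable_n_def by blast
  show ?thesis unfolding computable_n_def
  proof (intro exI allI impI)
    fix xs :: "nat list" assume "length xs = k"
    then show "reval (Cnf rF (map R [0..<m])) xs (F (map (\<lambda>g. g xs) gs))"
      by (intro reval.comp[of "map R [0..<m]" "map (\<lambda>g. g xs) gs"]) (auto simp: len R rF)
  qed
qed

lemma computable_n_comp1:
  assumes "computable_n 1 F" "computable_n k g"
  shows "computable_n k (\<lambda>xs. F [g xs])"
  using computable_n_comp[OF assms(1), of "[g]" k] assms(2) by auto

lemma computable_n_comp2:
  assumes "computable_n 2 F" "computable_n k g" "computable_n k h"
  shows "computable_n k (\<lambda>xs. F [g xs, h xs])"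
proof -
  have "\<And>j. j < 2 \<Longrightarrow> computable_n k ([g,h] ! j)"
  proof -
    fix j :: nat assume "j < 2" then have "j = 0 \<or> j = 1" by arith
    then show "computable_n k ([g,h] ! j)" using assms by auto
  qed
  then show ?thesis using computable_n_comp[OF assms(1), of "[g,h]" k] by simp
qed

definition primrec_list :: "(nat list \<Rightarrow> nat) \<Rightarrow> (nat list \<Rightarrow> nat) \<Rightarrow> nat \<Rightarrow> nat list \<Rightarrow> nat" where
  "primrec_list f g n xs = rec_nat (f xs) (\<lambda>i a. g (a # i # xs)) n"

lemma computable_n_primrec_head:
  assumes f: "computable_n k f" and g: "computable_n (Suc (Suc k)) g"
  shows "computable_n (Suc k) (\<lambda>ys. primrec_list f g (ys ! 0) (tl ys))"
proof -
  from f obtain rf where rf: "\<And>xs. length xs = k \<Longrightarrow> reval rf xs (f xs)" unfolding computable_n_def by blast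
  from g obtain rg where rg: "\<And>xs. length xs = Suc (Suc k) \<Longrightarrow> reval rg xs (g xs)" unfolding computable_n_def by blast
  have main: "reval (Prf rf rg) (n # xs) (primrec_list f g n xs)" if "length xs = k" for n xs
  proof (induction n)
    case 0 then show ?case using rf[OF that] by (simp add: primrec_list_def reval.pr0)
  next
    case (Suc n)
    have "reval rg (primrec_list f g n xs # n # xs) (g (primrec_list f g n xs # n # xs))" using rg that by simp
    then show ?case using Suc reval.prS by (fastforce simp: primrec_list_def)
  qed
  show ?thesis unfolding computable_n_def
  proof (intro exI allI impI)
    fix ys :: "nat list" assume "length ys = Suc k"
    then obtain n xs where "ys = n # xs" "length xs = k" by (cases ys) auto
    then show "reval (Prf rf rg) ys (primrec_list f g (ys ! 0) (tl ys))" using main by simp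
  qed
qed

lemma computable_n_primrec[computable_n_intros]:
  assumes f: "computable_n k f" and g: "computable_n (Suc (Suc k)) g" and n: "computable_n k n"
  shows "computable_n k (\<lambda>xs. primrec_list f g (n xs) xs)"
proof -
  have "computable_n k (\<lambda>xs. (\<lambda>ys. primrec_list f g (ys ! 0) (tl ys)) (map (\<lambda>h. h xs) (n # map (\<lambda>j xs. xs ! j) [0..<k])))"
    by (rule computable_n_comp[OF computable_n_primrec_head[OF f g]]) (auto simp: n nth_Cons computable_n_proj split: nat.splits)
  then show ?thesis
    by (rule computable_n_cong) (simp add: o_def, metis map_nth)
qed

lemma computable_1_Suc: "computable_n 1 (\<lambda>xs. Suc (xs ! 0))"
  unfolding computable_n_def
proof (intro exI allI impI)
  fix xs :: "nat list" assume "length xs = 1"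
  then obtain a where "xs = [a]" by (auto simp: length_Suc_conv)
  then show "reval Sf xs (Suc (xs ! 0))" using reval.suc[of a "[]"] by simp
qed

lemma computable_n_Suc[computable_n_intros]: "computable_n k f \<Longrightarrow> computable_n k (\<lambda>xs. Suc (f xs))"
  using computable_n_comp1[OF computable_1_Suc] by simp

lemma computable_2_add: "computable_n 2 (\<lambda>xs. xs ! 0 + xs ! 1)"
proof -
  have r: "computable_n (Suc (Suc 0)) (\<lambda>ys. primrec_list (\<lambda>xs. xs ! 0) (\<lambda>ys. Suc (ys ! 0)) (ys ! 0) (tl ys))"
    by (rule computable_n_primrec_head) (intro computable_n_intros | simp)+
  have e: "primrec_list (\<lambda>xs. xs ! 0) (\<lambda>ys. Suc (ys ! 0)) a [b] = a + b" for a b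
    by (induction a) (auto simp: primrec_list_def)
  show ?thesis
    unfolding numeral_2_eq_2 by (intro computable_n_cong[OF r]) (use e in \<open>auto simp: length_Suc_conv\<close>)
qed

lemma computable_n_add[computable_n_intros]:
  "computable_n k f \<Longrightarrow> computable_n k g \<Longrightarrow> computable_n k (\<lambda>xs. f xs + g xs)"
  using computable_n_comp2[OF computable_2_add] by simp

lemma computable_2_mult: "computable_n 2 (\<lambda>xs. xs ! 0 * xs ! 1)"
proof -
  have r: "computable_n (Suc (Suc 0)) (\<lambda>ys. primrec_list (\<lambda>xs. 0) (\<lambda>ys. ys ! 0 + ys ! 2) (ys ! 0) (tl ys))"
    by (rule computable_n_primrec_head) (intro computable_n_intros | simp)+
  have e: "primrec_list (\<lambda>xs. 0) (\<lambda>ys. ys ! 0 + ys ! 2) a [b] = a * b" for a b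
    by (induction a) (auto simp: primrec_list_def)
  show ?thesis
    unfolding numeral_2_eq_2 One_nat_def by (intro computable_n_cong[OF r]) (use e in \<open>auto simp: length_Suc_conv\<close>)
qed

lemma computable_n_mult[computable_n_intros]: "computable_n k f \<Longrightarrow> computable_n k g \<Longrightarrow> computable_n k (\<lambda>xs. f xs * g xs)"
  using computable_n_comp2[OF computable_2_mult] by simp

lemma computable_1_pred: "computable_n 1 (\<lambda>xs. xs ! 0 - 1)"
proof -
  have r: "computable_n (Suc 0) (\<lambda>ys. primrec_list (\<lambda>xs. 0) (\<lambda>ys. ys ! 1) (ys ! 0) (tl ys))"
    by (rule computable_n_primrec_head) (intro computable_n_intros | simp)+
  have e: "primrec_list (\<lambda>xs. 0) (\<lambda>ys. ys ! 1) a [] = a - 1" for a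
    by (induction a) (auto simp: primrec_list_def)
  show ?thesis
    unfolding numeral_2_eq_2 One_nat_def by (intro computable_n_cong[OF r]) (use e in \<open>auto simp: length_Suc_conv\<close>)
qed

lemma computable_n_pred[computable_n_intros]: "computable_n k f \<Longrightarrow> computable_n k (\<lambda>xs. f xs - 1)"
  using computable_n_comp1[OF computable_1_pred] by simp

lemma computable_2_diff: "computable_n 2 (\<lambda>xs. xs ! 1 - xs ! 0)"
proof -
  have r: "computable_n (Suc (Suc 0)) (\<lambda>ys. primrec_list (\<lambda>xs. xs ! 0) (\<lambda>ys. ys ! 0 - 1) (ys ! 0) (tl ys))"
    by (rule computable_n_primrec_head) (intro computable_n_intros | simp)+
  have e: "primrec_list (\<lambda>xs. xs ! 0) (\<lambda>ys. ys ! 0 - 1) a [b] = b - a" for a b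
    by (induction a) (auto simp: primrec_list_def)
  show ?thesis
    unfolding numeral_2_eq_2 One_nat_def by (intro computable_n_cong[OF r]) (use e in \<open>auto simp: length_Suc_conv\<close>)
qed

lemma computable_n_diff[computable_n_intros]: "computable_n k f \<Longrightarrow> computable_n k g \<Longrightarrow> computable_n k (\<lambda>xs. f xs - g xs)"
  using computable_n_comp2[OF computable_2_diff, of k g f] by simp

lemma computable_1_triangle: "computable_n 1 (\<lambda>xs. triangle (xs ! 0))"
proof -
  have r: "computable_n (Suc 0) (\<lambda>ys. primrec_list (\<lambda>xs. 0) (\<lambda>ys. ys ! 0 + Suc (ys ! 1)) (ys ! 0) (tl ys))"
    by (rule computable_n_primrec_head) (intro computable_n_intros | simp)+
  have e: "primrec_list (\<lambda>xs. 0) (\<lambda>ys. ys ! 0 + Suc (ys ! 1)) a [] = triangle a" for a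
    by (induction a) (auto simp: primrec_list_def)
  show ?thesis
    unfolding numeral_2_eq_2 One_nat_def by (intro computable_n_cong[OF r]) (use e in \<open>auto simp: length_Suc_conv\<close>)
qed

lemma computable_n_triangle[computable_n_intros]: "computable_n k f \<Longrightarrow> computable_n k (\<lambda>xs. triangle (f xs))"
  using computable_n_comp1[OF computable_1_triangle] by simp

lemma computable_n_prod_encode[computable_n_intros]: "computable_n k f \<Longrightarrow> computable_n k g \<Longrightarrow> computable_n k (\<lambda>xs. prod_encode (f xs, g xs))"
proof -
  assume "computable_n k f" "computable_n k g"
  then have "computable_n k (\<lambda>xs. triangle (f xs + g xs) + f xs)" by (intro computable_n_add computable_n_triangle)
  then show ?thesis by (simp add: prod_encode_def)
qed

definition pfst :: "nat \<Rightarrow> nat" where "pfst m = fst (prod_decode m)"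
definition psnd :: "nat \<Rightarrow> nat" where "psnd m = snd (prod_decode m)"

lemma pfst_prod_encode[simp]: "pfst (prod_encode (a, b)) = a" by (simp add: pfst_def)
lemma psnd_prod_encode[simp]: "psnd (prod_encode (a, b)) = b" by (simp add: psnd_def)

lemma triangle_mono: "a \<le> b \<Longrightarrow> triangle a \<le> triangle b"
  by (induction b) (auto simp: le_Suc_eq)

definition diag :: "nat \<Rightarrow> nat" where
  "diag m = rec_nat 0 (\<lambda>j a. a + (1 - (triangle (Suc j) - m))) m"

lemma rec_nat_sum: "rec_nat 0 (\<lambda>j a. a + h j) n = (\<Sum>j<n. h j)"
  by (induction n) auto

lemma diag_prod_encode: "diag (prod_encode (x, y)) = x + y"
proof -
  define m where "m = prod_encode (x, y)"
  define s where "s = x + y"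
  have m: "m = triangle s + x" by (simp add: m_def s_def prod_encode_def)
  have "s \<le> m" using m by (induction s) auto
  have h: "(1 - (triangle (Suc j) - m)) = (if Suc j \<le> s then 1 else 0)" for j
  proof (cases "Suc j \<le> s")
    case True then show ?thesis using triangle_mono[OF True] m by simp
  next
    case False
    then have "triangle (Suc s) \<le> triangle (Suc j)" by (intro triangle_mono) simp
    then show ?thesis using False m s_def by simp
  qed
  have c: "(\<Sum>j<n. (if Suc j \<le> s then 1 else 0::nat)) = min n s" for n
    by (induction n) auto
  show ?thesis unfolding diag_def m_def[symmetric] rec_nat_sum h c using \<open>s \<le> m\<close> s_def by simp
qed

lemma pfst_eq: "pfst m = m - triangle (diag m)"
proof -
  obtain x y where "m = prod_encode (x, y)" by (metis prod_decode_inverse surj_pair)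
  then show ?thesis by (simp add: diag_prod_encode) (simp add: prod_encode_def)
qed

lemma psnd_eq: "psnd m = diag m - pfst m"
proof -
  obtain x y where "m = prod_encode (x, y)" by (metis prod_decode_inverse surj_pair)
  then show ?thesis by (simp add: diag_prod_encode)
qed

lemma computable_1_diag: "computable_n 1 (\<lambda>xs. diag (xs ! 0))"
proof -
  have "computable_n 1 (\<lambda>xs. primrec_list (\<lambda>xs. 0) (\<lambda>ys. ys ! 0 + (1 - (triangle (Suc (ys ! 1)) - ys ! 2))) (xs ! 0) xs)"
    by (intro computable_n_intros) simp_all
  then show ?thesis
    by (rule computable_n_cong) (auto simp: length_Suc_conv primrec_list_def diag_def)
qed

lemma computable_n_diag[computable_n_intros]: "computable_n k f \<Longrightarrow> computable_n k (\<lambda>xs. diag (f xs))"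
  using computable_n_comp1[OF computable_1_diag] by simp

lemma computable_n_pfst[computable_n_intros]: "computable_n k f \<Longrightarrow> computable_n k (\<lambda>xs. pfst (f xs))"
  unfolding pfst_eq by (intro computable_n_intros)

lemma computable_n_psnd[computable_n_intros]: "computable_n k f \<Longrightarrow> computable_n k (\<lambda>xs. psnd (f xs))"
  unfolding psnd_eq pfst_eq by (intro computable_n_intros)

lemma eq_indicator: "(Suc 0 - (a - b)) * (Suc 0 - (b - a)) = (if a = b then 1 else (0::nat))"
  by (cases "a < b") auto

lemma computable_n_if_eq[computable_n_intros]: "computable_n k a \<Longrightarrow> computable_n k b \<Longrightarrow> computable_n k c \<Longrightarrow> computable_n k d \<Longrightarrow>
  computable_n k (\<lambda>xs. if a xs = b xs then c xs else d xs)"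
proof -
  assume r: "computable_n k a" "computable_n k b" "computable_n k c" "computable_n k d"
  have "computable_n k (\<lambda>xs. (1 - (a xs - b xs)) * (1 - (b xs - a xs)) * c xs + (1 - (1 - (a xs - b xs)) * (1 - (b xs - a xs))) * d xs)"
    using r by (intro computable_n_intros)
  then show ?thesis by (rule computable_n_cong) (simp add: eq_indicator)
qed

lemma computable_n_if_le[computable_n_intros]: "computable_n k a \<Longrightarrow> computable_n k b \<Longrightarrow> computable_n k c \<Longrightarrow> computable_n k d \<Longrightarrow>
  computable_n k (\<lambda>xs. if a xs \<le> b xs then c xs else d xs)"
proof -
  assume r: "computable_n k a" "computable_n k b" "computable_n k c" "computable_n k d"
  have "computable_n k (\<lambda>xs. (1 - (a xs - b xs)) * c xs + (1 - (1 - (a xs - b xs))) * d xs)"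
    using r by (intro computable_n_intros)
  then show ?thesis by (rule computable_n_cong) (simp add: eq_indicator)
qed

lemma computable_n_if_less[computable_n_intros]: "computable_n k a \<Longrightarrow> computable_n k b \<Longrightarrow> computable_n k c \<Longrightarrow> computable_n k d \<Longrightarrow>
  computable_n k (\<lambda>xs. if a xs < b xs then c xs else d xs)"
proof -
  assume r: "computable_n k a" "computable_n k b" "computable_n k c" "computable_n k d"
  have "computable_n k (\<lambda>xs. if Suc (a xs) \<le> b xs then c xs else d xs)"
    using r by (intro computable_n_intros)
  then show ?thesis by (rule computable_n_cong) auto
qed

lemma computable_iff_computable_n: "computable F \<longleftrightarrow> computable_n 1 (\<lambda>xs. F (xs ! 0))"
  unfolding computable_def computable_n_def
proof
  assume "\<exists>r. \<forall>n. reval r [n] (F n)"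
  then show "\<exists>r. \<forall>xs. length xs = 1 \<longrightarrow> reval r xs (F (xs ! 0))"
    by (metis One_nat_def length_0_conv length_Suc_conv nth_Cons_0)
next
  assume "\<exists>r. \<forall>xs. length xs = 1 \<longrightarrow> reval r xs (F (xs ! 0))"
  then show "\<exists>r. \<forall>n. reval r [n] (F n)" by (metis One_nat_def length_Cons list.size(3) nth_Cons_0)
qed

named_theorems computable_intros

lemma computable_id[computable_intros]: "computable (\<lambda>x. x)"
  unfolding computable_iff_computable_n by (intro computable_n_intros) simp
lemma computable_const[computable_intros]: "computable (\<lambda>x. c)"
  unfolding computable_iff_computable_n by (intro computable_n_intros)
lemma computable_add[computable_intros]: "computable f \<Longrightarrow> computable g \<Longrightarrow> computable (\<lambda>x. f x + g x)"
  unfolding computable_iff_computable_n by (intro computable_n_intros)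
lemma computable_diff[computable_intros]: "computable f \<Longrightarrow> computable g \<Longrightarrow> computable (\<lambda>x. f x - g x)"
  unfolding computable_iff_computable_n by (intro computable_n_intros)
lemma computable_mult[computable_intros]: "computable f \<Longrightarrow> computable g \<Longrightarrow> computable (\<lambda>x. f x * g x)"
  unfolding computable_iff_computable_n by (intro computable_n_intros)
lemma computable_Suc[computable_intros]: "computable f \<Longrightarrow> computable (\<lambda>x. Suc (f x))"
  unfolding computable_iff_computable_n by (intro computable_n_intros)
lemma computable_prod_encode[computable_intros]: "computable f \<Longrightarrow> computable g \<Longrightarrow> computable (\<lambda>x. prod_encode (f x, g x))"
  unfolding computable_iff_computable_n by (intro computable_n_intros)
lemma computable_pfst[computable_intros]: "computable f \<Longrightarrow> computable (\<lambda>x. pfst (f x))"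
  unfolding computable_iff_computable_n by (intro computable_n_intros)
lemma computable_psnd[computable_intros]: "computable f \<Longrightarrow> computable (\<lambda>x. psnd (f x))"
  unfolding computable_iff_computable_n by (intro computable_n_intros)
lemma computable_if_eq[computable_intros]: "computable a \<Longrightarrow> computable b \<Longrightarrow> computable c \<Longrightarrow> computable d \<Longrightarrow>
  computable (\<lambda>x. if a x = b x then c x else d x)"
  unfolding computable_iff_computable_n by (intro computable_n_intros)
lemma computable_if_le[computable_intros]: "computable a \<Longrightarrow> computable b \<Longrightarrow> computable c \<Longrightarrow> computable d \<Longrightarrow>
  computable (\<lambda>x. if a x \<le> b x then c x else d x)"
  unfolding computable_iff_computable_n by (intro computable_n_intros)
lemma computable_if_less[computable_intros]: "computable a \<Longrightarrow> computable b \<Longrightarrow> computable c \<Longrightarrow> computable d \<Longrightarrow>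
  computable (\<lambda>x. if a x < b x then c x else d x)"
  unfolding computable_iff_computable_n by (intro computable_n_intros)

lemma computable_comp: "computable H \<Longrightarrow> computable f \<Longrightarrow> computable (\<lambda>x. H (f x))"
  unfolding computable_iff_computable_n using computable_n_comp1 by fastforce

text \<open>Functions of several arguments enter the unary setting through their codes: the
  hypotheses below ask for computability of \<open>g\<close> as a function of \<open>prod_encode\<close>d tuples.\<close>

lemma computable_rec_nat[computable_intros]:
  assumes f: "computable f" and g: "computable (\<lambda>p. g (pfst p) (pfst (psnd p)) (psnd (psnd p)))"
    and n: "computable n"
  shows "computable (\<lambda>x. rec_nat (f x) (\<lambda>i a. g a i x) (n x))"
proof -
  let ?G = "\<lambda>p. g (pfst p) (pfst (psnd p)) (psnd (psnd p))"
  have G3: "computable_n 3 (\<lambda>ys. ?G (prod_encode (ys ! 0, prod_encode (ys ! 1, ys ! 2))))"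
    using computable_n_comp1[OF g[unfolded computable_iff_computable_n], of 3 "\<lambda>ys. prod_encode (ys ! 0, prod_encode (ys ! 1, ys ! 2))"]
    by (simp add: computable_n_prod_encode computable_n_proj)
  have r: "computable_n 1 (\<lambda>xs. primrec_list (\<lambda>xs. f (xs ! 0))
      (\<lambda>ys. ?G (prod_encode (ys ! 0, prod_encode (ys ! 1, ys ! 2)))) (n (xs ! 0)) xs)"
  proof (rule computable_n_primrec)
    show "computable_n 1 (\<lambda>xs. f (xs ! 0))" "computable_n 1 (\<lambda>xs. n (xs ! 0))"
      using f n unfolding computable_iff_computable_n .
    show "computable_n (Suc (Suc 1)) (\<lambda>ys. ?G (prod_encode (ys ! 0, prod_encode (ys ! 1, ys ! 2))))"
      using G3 by (simp add: numeral_3_eq_3)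
  qed
  have e: "primrec_list (\<lambda>xs. f (xs ! 0)) (\<lambda>ys. g (ys ! 0) (ys ! Suc 0) (ys ! 2)) m [x]
     = rec_nat (f x) (\<lambda>i a. g a i x) m" for m x
    by (induction m) (auto simp: primrec_list_def)
  show ?thesis unfolding computable_iff_computable_n
    by (rule computable_n_cong[OF r]) (auto simp: length_Suc_conv e)
qed

lemma computable_sum[computable_intros]:
  assumes g: "computable (\<lambda>p. g (pfst p) (psnd p))" and b: "computable b"
  shows "computable (\<lambda>x. \<Sum>i<b x. g i x)"
proof -
  have g2: "computable (\<lambda>p. g (pfst (psnd p)) (psnd (psnd p)))"
    using computable_comp[OF g computable_psnd[OF computable_id]] by simp
  have "computable (\<lambda>x. rec_nat 0 (\<lambda>i a. a + g i x) (b x))"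
    by (rule computable_rec_nat[where g="\<lambda>a i x. a + g i x"]; intro computable_intros g2 b)
  then show ?thesis by (simp add: rec_nat_sum)
qed

lemma computable_power[computable_intros]: "computable f \<Longrightarrow> computable g \<Longrightarrow> computable (\<lambda>x. f x ^ g x)"
proof -
  assume f: "computable f" and g: "computable g"
  have "computable (\<lambda>x. rec_nat 1 (\<lambda>i a. a * f x) (g x))"
    by (rule computable_rec_nat[where g="\<lambda>a i x. a * f x"]) (auto intro!: computable_intros computable_comp[OF f] g)
  moreover have "rec_nat 1 (\<lambda>i a. a * b) n = b ^ n" for b n :: nat by (induction n) auto
  ultimately show ?thesis by simp
qed

lemma div_as_sum: "(a::nat) div d = (\<Sum>j<a. if Suc j * d \<le> a then 1 else 0) * (if d = 0 then 0 else 1)"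
proof (cases "d = 0")
  case False
  have "(\<Sum>j<n. if Suc j * d \<le> a then 1 else 0::nat) = min n (a div d)" for n
  proof (induction n)
    case (Suc n)
    have "Suc n * d \<le> a \<longleftrightarrow> Suc n \<le> a div d" using False
      by (metis less_eq_div_iff_mult_less_eq mult.commute not_gr_zero)
    then show ?case using Suc by auto
  qed simp
  moreover have "a div d \<le> a" by simp
  ultimately show ?thesis using False by (simp add: min_absorb2)
qed simp

lemma computable_div[computable_intros]: "computable f \<Longrightarrow> computable g \<Longrightarrow> computable (\<lambda>x. f x div g x)"
proof -
  assume f: "computable f" and g: "computable g"
  have "computable (\<lambda>x. (\<Sum>j<f x. if Suc j * g x \<le> f x then 1 else 0) * (if g x = 0 then 0 else 1))"
    by (intro computable_intros f g computable_comp[OF f] computable_comp[OF g])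
  then show ?thesis by (simp only: div_as_sum[symmetric])
qed

lemma computable_mod[computable_intros]: "computable f \<Longrightarrow> computable g \<Longrightarrow> computable (\<lambda>x. f x mod g x)"
proof -
  assume f: "computable f" and g: "computable g"
  have "computable (\<lambda>x. f x - g x * (f x div g x))"
    by (intro computable_intros f g)
  then show ?thesis by (simp add: minus_mult_div_eq_mod)
qed

lemma computable_apply2: "computable (\<lambda>p. h (pfst p) (psnd p)) \<Longrightarrow> computable f \<Longrightarrow> computable g \<Longrightarrow>
   computable (\<lambda>x. h (f x) (g x))"
  using computable_comp[of "\<lambda>p. h (pfst p) (psnd p)" "\<lambda>x. prod_encode (f x, g x)"] computable_prod_encode by simp

lemma computable_apply3: "computable (\<lambda>p. h (pfst p) (pfst (psnd p)) (psnd (psnd p))) \<Longrightarrow> computable f \<Longrightarrow> computable g \<Longrightarrow> computable l \<Longrightarrow>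
   computable (\<lambda>x. h (f x) (g x) (l x))"
  using computable_comp[of "\<lambda>p. h (pfst p) (pfst (psnd p)) (psnd (psnd p))" "\<lambda>x. prod_encode (f x, prod_encode (g x, l x))"] computable_prod_encode by simp

lemma computable_apply4: "computable (\<lambda>p. h (pfst p) (pfst (psnd p)) (pfst (psnd (psnd p))) (psnd (psnd (psnd p)))) \<Longrightarrow>
   computable f \<Longrightarrow> computable g \<Longrightarrow> computable l \<Longrightarrow> computable r \<Longrightarrow>
   computable (\<lambda>x. h (f x) (g x) (l x) (r x))"
  using computable_comp[of "\<lambda>p. h (pfst p) (pfst (psnd p)) (pfst (psnd (psnd p))) (psnd (psnd (psnd p)))"
     "\<lambda>x. prod_encode (f x, prod_encode (g x, prod_encode (l x, r x)))"] computable_prod_encode by simp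

definition code_tl :: "nat \<Rightarrow> nat" where "code_tl c = psnd (c - 1)"
definition code_hd :: "nat \<Rightarrow> nat" where "code_hd c = pfst (c - 1)"
definition code_drop :: "nat \<Rightarrow> nat \<Rightarrow> nat" where "code_drop c i = rec_nat c (\<lambda>j a. code_tl a) i"
definition code_nth :: "nat \<Rightarrow> nat \<Rightarrow> nat" where "code_nth c i = code_hd (code_drop c i)"
definition bit_at :: "nat \<Rightarrow> nat \<Rightarrow> nat" where "bit_at m p = m div 2 ^ p mod 2"

lemma computable_code_tl[computable_intros]: "computable f \<Longrightarrow> computable (\<lambda>x. code_tl (f x))"
  unfolding code_tl_def by (intro computable_intros)
lemma computable_code_hd[computable_intros]: "computable f \<Longrightarrow> computable (\<lambda>x. code_hd (f x))"
  unfolding code_hd_def by (intro computable_intros)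
lemma computable_code_drop[computable_intros]: "computable f \<Longrightarrow> computable g \<Longrightarrow> computable (\<lambda>x. code_drop (f x) (g x))"
  unfolding code_drop_def by (intro computable_intros)
lemma computable_code_nth[computable_intros]: "computable f \<Longrightarrow> computable g \<Longrightarrow> computable (\<lambda>x. code_nth (f x) (g x))"
  unfolding code_nth_def by (intro computable_intros)
lemma computable_bit_at[computable_intros]: "computable f \<Longrightarrow> computable g \<Longrightarrow> computable (\<lambda>x. bit_at (f x) (g x))"
  unfolding bit_at_def by (intro computable_intros)

text \<open>A list is coded by \<open>list_encode\<close>; since its length is below its code \<open>l\<close>, a sum over
  \<open>i < l\<close> restricted to \<open>code_drop l i \<noteq> 0\<close> runs over its positions. A set of states below \<open>N\<close>
  is coded by the bit mask \<open>state_mask N\<close>; transitions \<open>(p, a, q)\<close> are coded by \<open>triple_code\<close>.\<close>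

definition code_mem :: "nat \<Rightarrow> nat \<Rightarrow> nat" where
  "code_mem l q = (if (\<Sum>i<l. if code_drop l i = 0 then 0 else if code_nth l i = q then 1 else (0::nat)) = 0 then 0 else 1)"
definition code_mask :: "nat \<Rightarrow> nat \<Rightarrow> nat" where
  "code_mask N l = (\<Sum>q<N. 2 ^ q * code_mem l q)"
definition code_trans :: "nat \<Rightarrow> nat \<Rightarrow> nat \<Rightarrow> nat \<Rightarrow> nat" where
  "code_trans D m a q = (if (\<Sum>i<D. if code_drop D i = 0 then 0 else
       bit_at m (pfst (code_nth D i)) * (if pfst (psnd (code_nth D i)) = a then 1 else 0) *
       (if psnd (psnd (code_nth D i)) = q then 1 else 0)) = 0 then 0 else 1)"
definition mask_step :: "nat \<Rightarrow> nat \<Rightarrow> nat \<Rightarrow> nat \<Rightarrow> nat" where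
  "mask_step N D m a = (\<Sum>q<N. 2 ^ q * code_trans D m a q)"
definition mask_final :: "nat \<Rightarrow> nat \<Rightarrow> nat" where
  "mask_final Fl m = (if (\<Sum>i<Fl. if code_drop Fl i = 0 then 0 else bit_at m (code_nth Fl i)) = 0 then 0 else 1)"

lemma computable_code_mem[computable_intros]: "computable f \<Longrightarrow> computable g \<Longrightarrow> computable (\<lambda>x. code_mem (f x) (g x))"
  by (rule computable_apply2) (unfold code_mem_def, intro computable_intros)
lemma computable_code_mask[computable_intros]: "computable f \<Longrightarrow> computable g \<Longrightarrow> computable (\<lambda>x. code_mask (f x) (g x))"
  by (rule computable_apply2) (unfold code_mask_def, intro computable_intros)
lemma computable_code_trans[computable_intros]: "computable f \<Longrightarrow> computable g \<Longrightarrow> computable l \<Longrightarrow> computable r \<Longrightarrow> computable (\<lambda>x. code_trans (f x) (g x) (l x) (r x))"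
  by (rule computable_apply4) (unfold code_trans_def, intro computable_intros)
lemma computable_mask_step[computable_intros]: "computable f \<Longrightarrow> computable g \<Longrightarrow> computable l \<Longrightarrow> computable r \<Longrightarrow> computable (\<lambda>x. mask_step (f x) (g x) (l x) (r x))"
  by (rule computable_apply4) (unfold mask_step_def, intro computable_intros)
lemma computable_mask_final[computable_intros]: "computable f \<Longrightarrow> computable g \<Longrightarrow> computable (\<lambda>x. mask_final (f x) (g x))"
  by (rule computable_apply2) (unfold mask_final_def, intro computable_intros)

lemma pfst_psnd_0: "pfst 0 = 0" "psnd 0 = 0"
  by (simp_all add: pfst_def psnd_def prod_decode_def prod_decode_aux.simps)

lemma code_tl_list_encode[simp]: "code_tl (list_encode xs) = list_encode (tl xs)"
  by (cases xs) (auto simp: code_tl_def pfst_psnd_0)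

lemma code_hd_Suc_prod_encode[simp]: "code_hd (Suc (prod_encode (a, b))) = a"
  by (simp add: code_hd_def)

lemma code_drop_list_encode: "code_drop (list_encode xs) i = list_encode (drop i xs)"
  by (induction i) (auto simp: code_drop_def drop_Suc tl_drop)

lemma code_nth_list_encode: "i < length xs \<Longrightarrow> code_nth (list_encode xs) i = xs ! i"
  unfolding code_nth_def code_drop_list_encode by (simp add: Cons_nth_drop_Suc[symmetric])

lemma list_encode_0_iff: "list_encode xs = 0 \<longleftrightarrow> xs = []"
  by (cases xs) auto

lemma length_le_list_encode: "length xs \<le> list_encode xs"
proof (induction xs)
  case (Cons x xs)
  then show ?case using le_prod_encode_2[of "list_encode xs" x] by simp
qed simp

lemma mem_less_list_encode: "x \<in> set xs \<Longrightarrow> x < list_encode xs"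
proof (induction xs)
  case (Cons a xs)
  then show ?case using le_prod_encode_1[of a "list_encode xs"] le_prod_encode_2[of "list_encode xs" a]
    by auto
qed simp

lemma sum_list_code: "(\<Sum>i<list_encode xs. if code_drop (list_encode xs) i = 0 then 0 else h (code_nth (list_encode xs) i))
   = (\<Sum>i<length xs. (h (xs ! i) :: nat))"
proof -
  have "(\<Sum>i<list_encode xs. if code_drop (list_encode xs) i = 0 then 0 else h (code_nth (list_encode xs) i))
     = (\<Sum>i<length xs. if code_drop (list_encode xs) i = 0 then 0 else h (code_nth (list_encode xs) i))"
    by (rule sum.mono_neutral_right) (auto simp: code_drop_list_encode list_encode_0_iff length_le_list_encode)
  also have "\<dots> = (\<Sum>i<length xs. h (xs ! i))"
    by (rule sum.cong) (auto simp: code_drop_list_encode list_encode_0_iff code_nth_list_encode)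
  finally show ?thesis .
qed

lemma sum_nth_eq_0_iff: "(\<Sum>i<length xs. (h (xs ! i) :: nat)) = 0 \<longleftrightarrow> (\<forall>x\<in>set xs. h x = 0)"
  by (simp; metis in_set_conv_nth lessThan_iff)

lemma code_mem_list_encode: "code_mem (list_encode l) q = (if q \<in> set l then 1 else 0)"
  unfolding code_mem_def sum_list_code[of l "\<lambda>e. if e = q then 1 else 0"] sum_nth_eq_0_iff by (auto simp: in_set_conv_nth)

definition state_mask :: "nat \<Rightarrow> nat set \<Rightarrow> nat" where
  "state_mask N X = (\<Sum>q<N. 2 ^ q * (if q \<in> X then 1 else 0))"

lemma code_mask_list_encode: "code_mask N (list_encode l) = state_mask N (set l)"
  unfolding code_mask_def state_mask_def code_mem_list_encode ..

lemma state_mask_less: "state_mask N X < 2 ^ N"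
proof (induction N)
  case (Suc N)
  have "state_mask (Suc N) X \<le> state_mask N X + 2 ^ N" by (auto simp: state_mask_def)
  then show ?case using Suc by simp
qed (simp add: state_mask_def)

lemma bit_at_add_power:
  assumes a: "a < 2 ^ N" and c: "c \<le> 1"
  shows "bit_at (a + c * 2 ^ N) p = (if p < N then bit_at a p else if p = N then c else 0)"
proof (cases "p < N")
  case True
  have "(2::nat) ^ N = 2 ^ p * 2 ^ (N - p)" using True by (simp add: power_add[symmetric])
  then have "(a + c * 2 ^ N) div 2 ^ p = a div 2 ^ p + c * 2 ^ (N - p)"
    by (simp add: div_add1_eq mult.left_commute)
  moreover have "even (c * 2 ^ (N - p))" using True by simp
  ultimately have "bit_at (a + c * 2 ^ N) p = bit_at a p" unfolding bit_at_def
    by (metis mod_add_right_eq add.right_neutral even_iff_mod_2_eq_zero)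
  then show ?thesis using True by simp
next
  case False
  show ?thesis
  proof (cases "p = N")
    case True
    then have "(a + c * 2 ^ N) div 2 ^ p = c" using a by simp
    then show ?thesis using True c by (auto simp: bit_at_def)
  next
    case F2: False
    then have "(2::nat) ^ Suc N \<le> 2 ^ p" using False by (intro power_increasing) auto
    moreover have "c * 2 ^ N \<le> (2::nat) ^ N" using c by simp
    then have "a + c * 2 ^ N < 2 ^ Suc N" using a by (simp only: power_Suc)
    ultimately have "(a + c * 2 ^ N) div 2 ^ p = 0" by simp
    then show ?thesis using False F2 by (simp add: bit_at_def)
  qed
qed

lemma bit_at_state_mask: "bit_at (state_mask N X) p = (if p < N \<and> p \<in> X then 1 else 0)"
proof (induction N)
  case (Suc N)
  have "state_mask (Suc N) X = state_mask N X + (if N \<in> X then 1 else 0) * 2 ^ N"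
    by (simp add: state_mask_def)
  then show ?case using Suc bit_at_add_power[OF state_mask_less, of "if N \<in> X then 1 else 0" N X p] by auto
qed (simp add: state_mask_def bit_at_def)

definition triple_code :: "nat \<times> nat \<times> nat \<Rightarrow> nat" where
  "triple_code t = (case t of (p, a, q) \<Rightarrow> prod_encode (p, prod_encode (a, q)))"

lemma bit_at_01: "bit_at m p = 0 \<or> bit_at m p = 1"
  by (auto simp: bit_at_def)

lemma bit_at_pos: "0 < bit_at m p \<longleftrightarrow> bit_at m p = 1"
  using bit_at_01[of m p] by auto

lemma code_trans_list_encode: "code_trans (list_encode (map triple_code Dl)) m a q =
   (if \<exists>(p, b, q') \<in> set Dl. bit_at m p = 1 \<and> b = a \<and> q' = q then 1 else 0)"
proof -
  define H where "H e = bit_at m (pfst e) * (if pfst (psnd e) = a then 1 else 0) * (if psnd (psnd e) = q then 1 else (0::nat))" for e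
  have t: "code_trans (list_encode (map triple_code Dl)) m a q = (if (\<Sum>i<length (map triple_code Dl). H (map triple_code Dl ! i)) = 0 then 0 else 1)"
    unfolding code_trans_def sum_list_code[of _ H, unfolded H_def] H_def ..
  have z: "(\<Sum>i<length (map triple_code Dl). H (map triple_code Dl ! i)) = 0 \<longleftrightarrow> (\<forall>x\<in>set Dl. H (triple_code x) = 0)"
    using sum_nth_eq_0_iff[of H "map triple_code Dl"] by simp
  have h: "H (triple_code (p,b,q')) = 0 \<longleftrightarrow> \<not>(bit_at m p = 1 \<and> b = a \<and> q' = q)" for p b q'
    using bit_at_01[of m p] by (auto simp: H_def triple_code_def)
  have e: "(\<forall>x\<in>set Dl. H (triple_code x) = 0) \<longleftrightarrow> \<not>(\<exists>(p, b, q')\<in>set Dl. bit_at m p = 1 \<and> b = a \<and> q' = q)"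
    by (auto simp: h)
  show ?thesis unfolding t z e by simp
qed

lemma mask_step_list_encode: "mask_step N (list_encode (map triple_code Dl)) (state_mask N X) a =
   state_mask N {q. \<exists>p. p < N \<and> p \<in> X \<and> (p, a, q) \<in> set Dl}"
  unfolding mask_step_def code_trans_list_encode bit_at_state_mask unfolding state_mask_def
  by (rule sum.cong) (auto split: if_splits)

lemma mask_final_list_encode: "mask_final (list_encode Fl) m = (if \<exists>q\<in>set Fl. bit_at m q = 1 then 1 else 0)"
  unfolding mask_final_def sum_list_code[of Fl "\<lambda>e. bit_at m e"] sum_nth_eq_0_iff by (auto simp: bit_at_pos)

section \<open>The product automaton\<close>

lemma takeWhile_neq_index: "distinct xs \<Longrightarrow> x \<in> set xs \<Longrightarrow>
   length (takeWhile (\<lambda>y. y \<noteq> x) xs) < length xs \<and> xs ! length (takeWhile (\<lambda>y. y \<noteq> x) xs) = x"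
  by (induction xs) auto

lemma length_takeWhile_neq_nth: "distinct xs \<Longrightarrow> i < length xs \<Longrightarrow> length (takeWhile (\<lambda>y. y \<noteq> xs ! i) xs) = i"
proof (induction xs arbitrary: i)
  case (Cons a xs)
  then show ?case by (cases i) (auto simp: nth_mem)
qed simp

lemma letter_idx_less: "letter_idx (x::'c::enum) < CARD('c)"
  unfolding letter_idx_def card_UNIV_length_enum using takeWhile_neq_index[OF enum_distinct, of x]
  by (simp add: UNIV_enum[symmetric])

lemma enum_nth_letter_idx: "(enum_class.enum :: 'c::enum list) ! letter_idx (x::'c) = x"
  unfolding letter_idx_def using takeWhile_neq_index[OF enum_distinct, of x] by (simp add: UNIV_enum[symmetric])

lemma letter_idx_enum_nth: "a < CARD('c::enum) \<Longrightarrow> letter_idx ((enum_class.enum :: 'c list) ! a) = a"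
  unfolding letter_idx_def card_UNIV_length_enum by (intro length_takeWhile_neq_nth) (simp_all add: enum_distinct)

lemma letter_idx_eq_iff: "letter_idx (x::'c::enum) = letter_idx y \<longleftrightarrow> x = y"
  by (metis enum_nth_letter_idx)

lemma letter_idx_less_iff_isl: "letter_idx (x::'s::enum + 'g::enum) < CARD('s) \<longleftrightarrow> isl x"
proof -
  define i where "i = letter_idx x"
  define ns where "ns = length (enum_class.enum :: 's list)"
  have e: "(enum_class.enum :: ('s + 'g) list) = map Inl enum_class.enum @ map Inr enum_class.enum"
    by (simp add: enum_sum_def)
  have "i < length (enum_class.enum :: ('s + 'g) list)"
    using letter_idx_less[of x] unfolding i_def card_UNIV_length_enum .
  moreover have "(enum_class.enum :: ('s + 'g) list) ! i = x" unfolding i_def by (rule enum_nth_letter_idx)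
  ultimately have "x = (if i < ns then Inl (enum_class.enum ! i) else Inr (enum_class.enum ! (i - ns)))"
    unfolding e ns_def by (auto simp: nth_append)
  then have "isl x \<longleftrightarrow> i < ns" by simp
  then show ?thesis unfolding i_def ns_def card_UNIV_length_enum by simp
qed

text \<open>States of \<open>sync_dfa\<close>: \<open>0\<close> inside \<open>(\<Sigma>\<Gamma>)\<^sup>*\<close>, \<open>1\<close> after an unmatched \<open>\<Sigma>\<close>-letter, \<open>2\<close> in a
  \<open>\<Sigma>\<^sup>*\<close>-tail, \<open>3\<close> in a \<open>\<Gamma>\<^sup>*\<close>-tail, \<open>4\<close> rejecting sink. States of \<open>split_dfa\<close>: \<open>0\<close> in \<open>\<Sigma>\<^sup>*\<close>,
  \<open>1\<close> in \<open>\<Gamma>\<^sup>*\<close>, \<open>2\<close> rejecting sink.\<close>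

definition sync_Inl :: "nat \<Rightarrow> nat" where
  "sync_Inl s = (if s = 0 then 1 else if s = 1 then 2 else if s = 2 then 2 else 4)"

definition sync_Inr :: "nat \<Rightarrow> nat" where
  "sync_Inr s = (if s = 0 then 3 else if s = 1 then 0 else if s = 3 then 3 else 4)"

definition split_Inl :: "nat \<Rightarrow> nat" where
  "split_Inl t = (if t = 0 then 0 else 2)"

definition split_Inr :: "nat \<Rightarrow> nat" where
  "split_Inr t = (if t = 2 then 2 else 1)"

definition sync_dfa :: "('s + 'g) \<Rightarrow> nat \<Rightarrow> nat" where
  "sync_dfa x s = (if isl x then sync_Inl s else sync_Inr s)"

definition split_dfa :: "('s + 'g) \<Rightarrow> nat \<Rightarrow> nat" where
  "split_dfa x t = (if isl x then split_Inl t else split_Inr t)"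

lemma tracker_bounds: "sync_Inl s \<le> 4" "sync_Inr s \<le> 4" "split_Inl t \<le> 2" "split_Inr t \<le> 2"
  by (auto simp: sync_Inl_def sync_Inr_def split_Inl_def split_Inr_def)

lemma fold_sync_dfa:
  "s \<le> 4 \<Longrightarrow> fold sync_dfa w s \<noteq> 4 \<longleftrightarrow>
    (s = 0 \<and> is_sync w) \<or> (s = 1 \<and> (all_Inl w \<or> (\<exists>b w'. w = Inr b # w' \<and> is_sync w'))) \<or>
    (s = 2 \<and> all_Inl w) \<or> (s = 3 \<and> all_Inr w)"
proof (induction w arbitrary: s)
  case (Cons x w)
  have "sync_dfa x s \<le> 4" by (auto simp: sync_dfa_def tracker_bounds)
  from Cons.IH[OF this] have IH: "fold sync_dfa (x # w) s \<noteq> 4 \<longleftrightarrow>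
      (sync_dfa x s = 0 \<and> is_sync w) \<or> (sync_dfa x s = 1 \<and> (all_Inl w \<or> (\<exists>b w'. w = Inr b # w' \<and> is_sync w'))) \<or>
      (sync_dfa x s = 2 \<and> all_Inl w) \<or> (sync_dfa x s = 3 \<and> all_Inr w)"
    by simp
  have "s = 0 \<or> s = 1 \<or> s = 2 \<or> s = 3 \<or> s = 4" using Cons.prems by arith
  then show ?case
    unfolding IH by (cases x) (auto simp: sync_dfa_def sync_Inl_def sync_Inr_def is_sync_Inl)
qed auto

lemma fold_sync_dfa_0: "fold sync_dfa w 0 \<noteq> 4 \<longleftrightarrow> is_sync w"
  using fold_sync_dfa[of 0 w] by simp

lemma fold_split_dfa: "t \<le> 2 \<Longrightarrow> fold split_dfa w t \<noteq> 2 \<longleftrightarrow> (t = 0 \<and> is_split w) \<or> (t = 1 \<and> all_Inr w)"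
proof (induction w arbitrary: t)
  case (Cons x w)
  have "split_dfa x t \<le> 2" by (auto simp: split_dfa_def tracker_bounds)
  from Cons.IH[OF this] have IH: "fold split_dfa (x # w) t \<noteq> 2 \<longleftrightarrow>
      (split_dfa x t = 0 \<and> is_split w) \<or> (split_dfa x t = 1 \<and> all_Inr w)"
    by simp
  have "t = 0 \<or> t = 1 \<or> t = 2" using Cons.prems by arith
  then show ?case unfolding IH by (cases x) (auto simp: split_dfa_def split_Inl_def split_Inr_def)
qed auto

lemma fold_split_dfa_0: "fold split_dfa w 0 \<noteq> 2 \<longleftrightarrow> is_split w"
  using fold_split_dfa[of 0 w] by simp

text \<open>The input \<open>n = enc_pair A\<^sub>1 A\<^sub>2\<close> bounds all states of \<open>A\<^sub>1\<close> and \<open>A\<^sub>2\<close>, so sets of their states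
  are masks below \<open>2\<^sup>n\<close>. A state of the product automaton codes a quadruple: the states of
  \<open>sync_dfa\<close> and \<open>split_dfa\<close> and the current state sets of \<open>A\<^sub>1\<close> and \<open>A\<^sub>2\<close>; letters are
  read through \<open>letter_idx\<close>, the \<open>\<Sigma>\<close>-letters being those with index below \<open>CARD('s)\<close>.
  Transitions and final states are listed in decreasing order of state so that their codes
  are computed by \<open>rec_nat\<close>.\<close>

definition prod_delta :: "nat \<Rightarrow> nat \<Rightarrow> nat \<Rightarrow> nat \<Rightarrow> nat" where
  "prod_delta K1 n st a = prod_encode (if a < K1 then sync_Inl (pfst st) else sync_Inr (pfst st),
      prod_encode (if a < K1 then split_Inl (pfst (psnd st)) else split_Inr (pfst (psnd st)),
      prod_encode (mask_step n (pfst (psnd (pfst n))) (pfst (psnd (psnd st))) a,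
                   mask_step n (pfst (psnd (psnd n))) (psnd (psnd (psnd st))) a)))"

definition state_bound :: "nat \<Rightarrow> nat" where
  "state_bound n = Suc (prod_encode (4, prod_encode (2, prod_encode (2 ^ n, 2 ^ n))))"

definition prod_init :: "nat \<Rightarrow> nat" where
  "prod_init n = prod_encode (0, prod_encode (0, prod_encode (code_mask n (pfst (pfst n)), code_mask n (pfst (psnd n)))))"

definition prod_accepts :: "(nat \<Rightarrow> nat \<Rightarrow> nat \<Rightarrow> nat \<Rightarrow> nat) \<Rightarrow> nat \<Rightarrow> nat \<Rightarrow> nat" where
  "prod_accepts \<Phi> n st = \<Phi> (pfst st) (pfst (psnd st)) (mask_final (psnd (psnd (pfst n))) (pfst (psnd (psnd st))))
     (mask_final (psnd (psnd (psnd n))) (psnd (psnd (psnd st))))"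

definition prod_dfa :: "(nat \<Rightarrow> nat \<Rightarrow> nat \<Rightarrow> nat \<Rightarrow> nat) \<Rightarrow> nat \<Rightarrow> ('s::enum + 'g::enum) nfa" where
  "prod_dfa \<Phi> n = ([prod_init n],
     map (\<lambda>t. (t div CARD('s + 'g), enum_class.enum ! (t mod CARD('s + 'g)),
               prod_delta CARD('s) n (t div CARD('s + 'g)) (t mod CARD('s + 'g))))
       (rev [0..<state_bound n * CARD('s + 'g)]),
     filter (\<lambda>t. prod_accepts \<Phi> n t \<noteq> 0) (rev [0..<state_bound n]))"

lemma trans_prod_dfa:
  "(s, x, s') \<in> nfa_trans (prod_dfa \<Phi> n :: ('s::enum + 'g::enum) nfa) \<longleftrightarrow>
    s < state_bound n \<and> s' = prod_delta CARD('s) n s (letter_idx x)"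
proof
  let ?K = "CARD('s + 'g)"
  have K: "0 < ?K" by simp
  assume "(s, x, s') \<in> nfa_trans (prod_dfa \<Phi> n :: ('s + 'g) nfa)"
  then obtain t where t: "t < state_bound n * ?K" "s = t div ?K" "x = enum_class.enum ! (t mod ?K)"
      "s' = prod_delta CARD('s) n (t div ?K) (t mod ?K)"
    unfolding prod_dfa_def by auto
  have "letter_idx x = t mod ?K" using t(3) letter_idx_enum_nth[of "t mod ?K", where 'c = "'s + 'g"] K by simp
  moreover have "s < state_bound n" using t(1,2) K by (simp add: less_mult_imp_div_less)
  ultimately show "s < state_bound n \<and> s' = prod_delta CARD('s) n s (letter_idx x)" using t by simp
next
  let ?K = "CARD('s + 'g)"
  assume a: "s < state_bound n \<and> s' = prod_delta CARD('s) n s (letter_idx x)"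
  define t where "t = s * ?K + letter_idx x"
  have li: "letter_idx x < ?K" by (rule letter_idx_less)
  have "t < Suc s * ?K" using li t_def by simp
  also have "\<dots> \<le> state_bound n * ?K" using a by (intro mult_le_mono1) simp
  finally have "t < state_bound n * ?K" .
  moreover have "t div ?K = s" "t mod ?K = letter_idx x" using li t_def by auto
  ultimately show "(s, x, s') \<in> nfa_trans (prod_dfa \<Phi> n :: ('s + 'g) nfa)"
    unfolding prod_dfa_def using a enum_nth_letter_idx[of x] by (auto intro!: image_eqI[where x = t])
qed

lemma init_prod_dfa: "nfa_init (prod_dfa \<Phi> n) = {prod_init n}"
  unfolding prod_dfa_def by auto

lemma final_prod_dfa: "s \<in> nfa_final (prod_dfa \<Phi> n) \<longleftrightarrow> s < state_bound n \<and> prod_accepts \<Phi> n s \<noteq> 0"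
  unfolding prod_dfa_def by auto

lemma prod_encode_mono: "a \<le> a' \<Longrightarrow> b \<le> b' \<Longrightarrow> prod_encode (a, b) \<le> prod_encode (a', b')"
  unfolding prod_encode_def using triangle_mono[of "a + b" "a' + b'"] by simp

lemma mask_step_eq_state_mask: "mask_step N D m a = state_mask N {q. code_trans D m a q \<noteq> 0}"
  unfolding mask_step_def state_mask_def by (rule sum.cong) (auto simp: code_trans_def)

lemma code_mask_eq_state_mask: "code_mask N l = state_mask N {q. code_mem l q \<noteq> 0}"
  unfolding code_mask_def state_mask_def by (rule sum.cong) (auto simp: code_mem_def)

definition valid_state :: "nat \<Rightarrow> nat \<Rightarrow> bool" where
  "valid_state n s \<longleftrightarrow>
     pfst s \<le> 4 \<and> pfst (psnd s) \<le> 2 \<and> pfst (psnd (psnd s)) < 2 ^ n \<and> psnd (psnd (psnd s)) < 2 ^ n"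

lemma prod_encode_unpair4:
  "s = prod_encode (pfst s, prod_encode (pfst (psnd s), prod_encode (pfst (psnd (psnd s)), psnd (psnd (psnd s)))))"
  by (simp add: pfst_def psnd_def)

lemma valid_state_less_bound: "valid_state n s \<Longrightarrow> s < state_bound n"
proof -
  assume "valid_state n s"
  then have "s \<le> prod_encode (4, prod_encode (2, prod_encode (2 ^ n, 2 ^ n)))"
    unfolding valid_state_def by (subst prod_encode_unpair4) (intro prod_encode_mono; simp)
  then show ?thesis by (simp add: state_bound_def)
qed

lemma valid_state_prod_delta: "valid_state n (prod_delta K1 n s a)"
  unfolding valid_state_def prod_delta_def by (simp add: tracker_bounds mask_step_eq_state_mask state_mask_less)

lemma valid_state_prod_init: "valid_state n (prod_init n)"
  unfolding valid_state_def prod_init_def by (simp add: code_mask_eq_state_mask state_mask_less)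

lemma reach_prod_dfa:
  assumes "valid_state n s"
  shows "reach (prod_dfa \<Phi> n :: ('s::enum + 'g::enum) nfa) s w s' \<longleftrightarrow>
    s' = fold (\<lambda>x s. prod_delta CARD('s) n s (letter_idx x)) w s"
  using assms
proof (induction w arbitrary: s)
  case (Cons x w)
  have "s < state_bound n" using Cons.prems valid_state_less_bound by blast
  then show ?case
    using Cons.IH[OF valid_state_prod_delta[of n "CARD('s)" s "letter_idx x"]] by (auto simp: trans_prod_dfa)
qed auto

lemma lang_prod_dfa_fold:
  "lang (prod_dfa \<Phi> n :: ('s::enum + 'g::enum) nfa) =
    {w. prod_accepts \<Phi> n (fold (\<lambda>x s. prod_delta CARD('s) n s (letter_idx x)) w (prod_init n)) \<noteq> 0}"
proof -
  let ?run = "\<lambda>w. fold (\<lambda>x s. prod_delta CARD('s) n s (letter_idx x)) w (prod_init n)"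
  have "valid_state n (?run w)" for w
    by (cases w rule: rev_cases) (auto simp: valid_state_prod_init valid_state_prod_delta)
  then have bound: "?run w < state_bound n" for w by (rule valid_state_less_bound)
  have run: "reach (prod_dfa \<Phi> n :: ('s + 'g) nfa) (prod_init n) w q \<longleftrightarrow> q = ?run w" for w q
    by (rule reach_prod_dfa[OF valid_state_prod_init])
  show ?thesis unfolding lang_def init_prod_dfa by (auto simp: final_prod_dfa run bound)
qed

definition letter_code :: "nat \<times> 'c::enum \<times> nat \<Rightarrow> nat \<times> nat \<times> nat" where
  "letter_code t = (case t of (p, c, q) \<Rightarrow> (p, letter_idx c, q))"

lemma enc_nfa_triple_code:
  "enc_nfa (I, D, F) = prod_encode (list_encode I, prod_encode (list_encode (map triple_code (map letter_code D)), list_encode F))"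
proof -
  have eq: "(\<lambda>(p, c, q). prod_encode (p, prod_encode (letter_idx c, q))) = triple_code \<circ> letter_code"
    by (auto simp: fun_eq_iff triple_code_def letter_code_def)
  show ?thesis unfolding enc_nfa.simps map_map eq ..
qed

lemma letter_code_mem: "(p, letter_idx x, q) \<in> letter_code ` S \<longleftrightarrow> (p, x, q) \<in> S"
  by (force simp: letter_code_def letter_idx_eq_iff)

definition post :: "'c nfa \<Rightarrow> nat set \<Rightarrow> 'c \<Rightarrow> nat set" where
  "post A X x = {q. \<exists>p\<in>X. (p, x, q) \<in> nfa_trans A}"

definition posts :: "'c nfa \<Rightarrow> nat set \<Rightarrow> 'c list \<Rightarrow> nat set" where
  "posts A X w = fold (\<lambda>x X. post A X x) w X"

lemma posts_reach: "posts A X w = {q. \<exists>p\<in>X. reach A p w q}"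
proof (induction w arbitrary: X)
  case (Cons x w)
  have "posts A X (x # w) = posts A (post A X x) w" by (simp add: posts_def)
  then show ?case using Cons by (auto simp: post_def)
qed (simp add: posts_def)

lemma enc_nfa_bounds_states:
  assumes "enc_nfa A \<le> n"
  shows "p \<in> nfa_init A \<Longrightarrow> p < n"
    and "(p, c, q) \<in> nfa_trans A \<Longrightarrow> p < n \<and> q < n"
    and "q \<in> nfa_final A \<Longrightarrow> q < n"
proof -
  obtain I D F where A: "A = (I, D, F)" by (cases A)
  have e: "prod_encode (list_encode I, prod_encode (list_encode (map triple_code (map letter_code D)), list_encode F)) \<le> n"
    using assms unfolding A enc_nfa_triple_code .
  have eI: "list_encode I \<le> n" using le_trans[OF le_prod_encode_1 e] .
  have eD: "list_encode (map triple_code (map letter_code D)) \<le> n"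
    using le_trans[OF le_trans[OF le_prod_encode_1 le_prod_encode_2] e] .
  have eF: "list_encode F \<le> n" using le_trans[OF le_trans[OF le_prod_encode_2 le_prod_encode_2] e] .
  show "p \<in> nfa_init A \<Longrightarrow> p < n" using mem_less_list_encode[of p I] eI A by auto
  show "q \<in> nfa_final A \<Longrightarrow> q < n" using mem_less_list_encode[of q F] eF A by auto
  assume "(p, c, q) \<in> nfa_trans A"
  then have "triple_code (p, letter_idx c, q) \<in> set (map triple_code (map letter_code D))"
    using A by (force simp: letter_code_def)
  then have "triple_code (p, letter_idx c, q) < n" using mem_less_list_encode eD by (meson less_le_trans)
  moreover have "p \<le> triple_code (p, letter_idx c, q)" "q \<le> triple_code (p, letter_idx c, q)"
    unfolding triple_code_def using le_prod_encode_1 le_trans[OF le_prod_encode_2 le_prod_encode_2] by simp_all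
  ultimately show "p < n \<and> q < n" by linarith
qed

lemma mask_step_enc_nfa:
  assumes "enc_nfa A \<le> n"
  shows "mask_step n (pfst (psnd (enc_nfa A))) (state_mask n X) (letter_idx x) = state_mask n (post A X x)"
proof -
  obtain I D F where A: "A = (I, D, F)" by (cases A)
  have "{q. \<exists>p. p < n \<and> p \<in> X \<and> (p, letter_idx x, q) \<in> set (map letter_code D)} = post A X x"
    using enc_nfa_bounds_states(2)[OF assms] unfolding A post_def by (auto simp: letter_code_mem)
  then show ?thesis unfolding A enc_nfa_triple_code pfst_prod_encode psnd_prod_encode mask_step_list_encode by simp
qed

lemma code_mask_enc_nfa: "code_mask n (pfst (enc_nfa A)) = state_mask n (nfa_init A)"
  by (cases A) (simp add: enc_nfa_triple_code code_mask_list_encode)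

lemma mask_final_enc_nfa:
  assumes "enc_nfa A \<le> n"
  shows "mask_final (psnd (psnd (enc_nfa A))) (state_mask n X) = (if \<exists>q\<in>nfa_final A. q \<in> X then 1 else 0)"
  using enc_nfa_bounds_states(3)[OF assms]
  by (cases A) (auto simp: enc_nfa_triple_code mask_final_list_encode bit_at_state_mask)

lemma fold_prod_delta:
  fixes A1 A2 :: "('s::enum + 'g::enum) nfa"
  assumes n: "n = enc_pair A1 A2"
  shows "fold (\<lambda>x s. prod_delta CARD('s) n s (letter_idx x)) w
      (prod_encode (s, prod_encode (t, prod_encode (state_mask n X, state_mask n Y)))) =
    prod_encode (fold sync_dfa w s, prod_encode (fold split_dfa w t,
      prod_encode (state_mask n (posts A1 X w), state_mask n (posts A2 Y w))))"
proof (induction w arbitrary: s t X Y)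
  case (Cons x w)
  have l: "enc_nfa A1 \<le> n" "enc_nfa A2 \<le> n" using n le_prod_encode_1 le_prod_encode_2 by (auto simp: enc_pair_def)
  have "prod_delta CARD('s) n (prod_encode (s, prod_encode (t, prod_encode (state_mask n X, state_mask n Y)))) (letter_idx x)
     = prod_encode (sync_dfa x s, prod_encode (split_dfa x t, prod_encode (state_mask n (post A1 X x), state_mask n (post A2 Y x))))"
    unfolding prod_delta_def using mask_step_enc_nfa[OF l(1)] mask_step_enc_nfa[OF l(2)] letter_idx_less_iff_isl[of x] n
    by (simp add: sync_dfa_def split_dfa_def enc_pair_def)
  then show ?case using Cons by (simp add: posts_def)
qed (simp add: posts_def)

lemma lang_prod_dfa:
  fixes A1 A2 :: "('s::enum + 'g::enum) nfa"
  assumes n: "n = enc_pair A1 A2"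
  shows "lang (prod_dfa \<Phi> n :: ('s + 'g) nfa) =
     {w. \<Phi> (fold sync_dfa w 0) (fold split_dfa w 0) (if w \<in> lang A1 then 1 else 0) (if w \<in> lang A2 then 1 else 0) \<noteq> 0}"
proof -
  have l: "enc_nfa A1 \<le> n" "enc_nfa A2 \<le> n" using n le_prod_encode_1 le_prod_encode_2 by (auto simp: enc_pair_def)
  have init: "prod_init n = prod_encode (0, prod_encode (0, prod_encode (state_mask n (nfa_init A1), state_mask n (nfa_init A2))))"
    unfolding prod_init_def using n by (simp add: code_mask_enc_nfa enc_pair_def)
  have "mask_final (psnd (psnd (pfst n))) (state_mask n (posts A1 (nfa_init A1) w)) = (if w \<in> lang A1 then 1 else 0)"
      "mask_final (psnd (psnd (psnd n))) (state_mask n (posts A2 (nfa_init A2) w)) = (if w \<in> lang A2 then 1 else 0)" for w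
    using mask_final_enc_nfa[OF l(1)] mask_final_enc_nfa[OF l(2)] n
    by (auto simp: posts_reach lang_def enc_pair_def)
  then show ?thesis unfolding lang_prod_dfa_fold init fold_prod_delta[OF n] prod_accepts_def by simp
qed

definition delta_code :: "nat \<Rightarrow> nat \<Rightarrow> nat \<Rightarrow> nat" where
  "delta_code K K1 n = rec_nat 0 (\<lambda>t a. Suc (prod_encode (prod_encode (t div K,
     prod_encode (t mod K, prod_delta K1 n (t div K) (t mod K))), a))) (state_bound n * K)"

definition final_code :: "(nat \<Rightarrow> nat \<Rightarrow> nat \<Rightarrow> nat \<Rightarrow> nat) \<Rightarrow> nat \<Rightarrow> nat" where
  "final_code \<Phi> n = rec_nat 0 (\<lambda>t a. if prod_accepts \<Phi> n t = 0 then a else Suc (prod_encode (t, a))) (state_bound n)"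

definition prod_dfa_code :: "(nat \<Rightarrow> nat \<Rightarrow> nat \<Rightarrow> nat \<Rightarrow> nat) \<Rightarrow> nat \<Rightarrow> nat \<Rightarrow> nat \<Rightarrow> nat" where
  "prod_dfa_code \<Phi> K K1 n =
     prod_encode (Suc (prod_encode (prod_init n, 0)), prod_encode (delta_code K K1 n, final_code \<Phi> n))"

lemma list_encode_map_rev_upt: "list_encode (map f (rev [0..<m])) = rec_nat 0 (\<lambda>t a. Suc (prod_encode (f t, a))) m"
  by (induction m) auto

lemma list_encode_filter_rev_upt:
  "list_encode (filter P (rev [0..<m])) = rec_nat 0 (\<lambda>t a. if \<not> P t then a else Suc (prod_encode (t, a))) m"
  by (induction m) auto

lemma enc_nfa_prod_dfa:
  "enc_nfa (prod_dfa \<Phi> n :: ('s::enum + 'g::enum) nfa) = prod_dfa_code \<Phi> CARD('s + 'g) CARD('s) n"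
proof -
  let ?K = "CARD('s + 'g)"
  have "(\<lambda>(p, c, q). prod_encode (p, prod_encode (letter_idx c, q))) \<circ>
        (\<lambda>t. (t div ?K, (enum_class.enum :: ('s + 'g) list) ! (t mod ?K), prod_delta CARD('s) n (t div ?K) (t mod ?K)))
      = (\<lambda>t. prod_encode (t div ?K, prod_encode (t mod ?K, prod_delta CARD('s) n (t div ?K) (t mod ?K))))"
    using letter_idx_enum_nth[of "_ mod ?K", where 'c = "'s + 'g"] by (auto simp: fun_eq_iff)
  then show ?thesis
    unfolding prod_dfa_def prod_dfa_code_def delta_code_def final_code_def
    by (simp add: list_encode_map_rev_upt list_encode_filter_rev_upt del: rev_map)
qed

lemma computable_prod_delta[computable_intros]:
  assumes "computable f" "computable g" "computable l"
  shows "computable (\<lambda>x. prod_delta K1 (f x) (g x) (l x))"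
proof -
  have "computable (\<lambda>p. prod_delta K1 (pfst p) (pfst (psnd p)) (psnd (psnd p)))"
    unfolding prod_delta_def sync_Inl_def sync_Inr_def split_Inl_def split_Inr_def by (intro computable_intros)
  then show ?thesis using assms by (rule computable_apply3)
qed

lemma computable_state_bound[computable_intros]: "computable f \<Longrightarrow> computable (\<lambda>x. state_bound (f x))"
  unfolding state_bound_def by (intro computable_intros)

lemma computable_prod_init[computable_intros]: "computable f \<Longrightarrow> computable (\<lambda>x. prod_init (f x))"
  unfolding prod_init_def by (intro computable_intros)

lemma computable_delta_code: "computable (delta_code K K1)"
  unfolding delta_code_def by (intro computable_intros)

lemma computable_final_code:
  assumes "computable (\<lambda>p. \<Phi> (pfst p) (pfst (psnd p)) (pfst (psnd (psnd p))) (psnd (psnd (psnd p))))"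
  shows "computable (final_code \<Phi>)"
proof -
  have "computable (\<lambda>p. prod_accepts \<Phi> (pfst p) (psnd p))"
    unfolding prod_accepts_def by (rule computable_apply4[OF assms]) (intro computable_intros)+
  then have accepts: "computable (\<lambda>x. prod_accepts \<Phi> (f x) (g x))" if "computable f" "computable g" for f g
    using that by (rule computable_apply2)
  show ?thesis unfolding final_code_def by (intro computable_intros accepts)
qed

lemma computable_prod_dfa_code:
  assumes "computable (\<lambda>p. \<Phi> (pfst p) (pfst (psnd p)) (pfst (psnd (psnd p))) (psnd (psnd (psnd p))))"
  shows "computable (prod_dfa_code \<Phi> K K1)"
  using computable_comp[OF computable_delta_code computable_id] computable_comp[OF computable_final_code[OF assms] computable_id]
  unfolding prod_dfa_code_def by (intro computable_intros) simp_all

definition accept_S :: "nat \<Rightarrow> nat \<Rightarrow> nat \<Rightarrow> nat \<Rightarrow> nat" where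
  "accept_S ds dt f1 f2 = (if ds = 4 then 0 else if f2 = 0 then 1 else 0)"

definition accept_X :: "nat \<Rightarrow> nat \<Rightarrow> nat \<Rightarrow> nat \<Rightarrow> nat" where
  "accept_X ds dt f1 f2 = (if ds = 4 then 0 else if f1 = 0 then (if f2 = 0 then 1 else 0) else 0)"

definition accept_T :: "nat \<Rightarrow> nat \<Rightarrow> nat \<Rightarrow> nat \<Rightarrow> nat" where
  "accept_T ds dt f1 f2 = (if dt = 2 then accept_X ds dt f1 f2 else 1)"

definition reduction :: "nat \<Rightarrow> nat \<Rightarrow> nat \<Rightarrow> nat" where
  "reduction K K1 n = prod_encode (prod_dfa_code accept_S K K1 n, prod_dfa_code accept_T K K1 n)"

lemma computable_reduction: "computable (reduction K K1)"
proof -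
  have "computable (prod_dfa_code accept_S K K1)"
    by (rule computable_prod_dfa_code) (unfold accept_S_def, intro computable_intros)
  moreover have "computable (prod_dfa_code accept_T K K1)"
    by (rule computable_prod_dfa_code) (unfold accept_T_def accept_X_def, intro computable_intros)
  ultimately show ?thesis unfolding reduction_def
    using computable_comp[OF _ computable_id] by (intro computable_intros) simp_all
qed

lemma
  fixes A1 A2 :: "('s::enum + 'g::enum) nfa"
  assumes "n = enc_pair A1 A2"
  shows lang_prod_dfa_accept_S: "lang (prod_dfa accept_S n :: ('s + 'g) nfa) = {w. is_sync w \<and> w \<notin> lang A2}"
    and lang_prod_dfa_accept_T:
      "lang (prod_dfa accept_T n :: ('s + 'g) nfa) = {w. is_split w \<or> (is_sync w \<and> w \<notin> lang A1 \<and> w \<notin> lang A2)}"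
    and lang_prod_dfa_accept_X:
      "lang (prod_dfa accept_X n :: ('s + 'g) nfa) = {w. is_sync w \<and> w \<notin> lang A1 \<and> w \<notin> lang A2}"
  unfolding lang_prod_dfa[OF assms] accept_S_def accept_T_def accept_X_def
  using fold_sync_dfa_0 fold_split_dfa_0 by auto

lemma reduction_correct:
  fixes A1 A2 :: "('s::enum + 'g::enum) nfa"
  assumes A: "lang A1 \<subseteq> sync_words \<and> lang A2 \<subseteq> sync_words \<and> semL (lang A1) \<inter> semL (lang A2) = {}"
  shows "\<exists>S T :: ('s + 'g) nfa. reduction CARD('s + 'g) CARD('s) (enc_pair A1 A2) = enc_pair S T \<and>
    finite_shiftlag (lang S) \<and> finite_shiftlag (lang T) \<and>
    ((\<exists>R. recognizable R \<and> semL (lang A1) \<subseteq> R \<and> R \<inter> semL (lang A2) = {}) \<longleftrightarrow> semL (lang S) \<in> Rel (lang T))"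
proof -
  let ?S = "prod_dfa accept_S (enc_pair A1 A2) :: ('s + 'g) nfa"
  let ?T = "prod_dfa accept_T (enc_pair A1 A2) :: ('s + 'g) nfa"
  note S = lang_prod_dfa_accept_S[OF refl] and T = lang_prod_dfa_accept_T[OF refl]
  have sync: "\<forall>w\<in>lang A1 \<union> lang A2. is_sync w" using A is_sync_iff_sync_words by blast
  have X: "regular {w. is_sync w \<and> w \<notin> lang A1 \<and> w \<notin> lang A2}"
    unfolding lang_prod_dfa_accept_X[OF refl, symmetric] by (rule regular_lang)
  have "reduction CARD('s + 'g) CARD('s) (enc_pair A1 A2) = enc_pair ?S ?T"
    by (simp add: reduction_def enc_nfa_prod_dfa enc_pair_def)
  moreover have "finite_shiftlag (lang ?S)" "finite_shiftlag (lang ?T)"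
    by (auto intro: finite_shiftlagI simp: S T)
  moreover have "(\<exists>R. recognizable R \<and> semL (lang A1) \<subseteq> R \<and> R \<inter> semL (lang A2) = {}) \<longleftrightarrow>
      semL (lang ?S) \<in> Rel (lang ?T)"
    unfolding S T using A by (intro separable_iff_Rel[OF sync _ X]) blast
  ultimately show ?thesis by blast
qed

theorem mainTheorem10:
  "\<exists>F. computable F \<and>
     (\<forall>A1 A2 :: ('s::enum + 'g::enum) nfa.
        lang A1 \<subseteq> sync_words \<and> lang A2 \<subseteq> sync_words \<and> semL (lang A1) \<inter> semL (lang A2) = {}
        \<longrightarrow> (\<exists>S T :: ('s + 'g) nfa.
               F (enc_pair A1 A2) = enc_pair S T \<and>
               finite_shiftlag (lang S) \<and> finite_shiftlag (lang T) \<and>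
               ((\<exists>R. recognizable R \<and> semL (lang A1) \<subseteq> R \<and> R \<inter> semL (lang A2) = {})
                  \<longleftrightarrow> semL (lang S) \<in> Rel (lang T))))"
  by (intro exI[of _ "reduction CARD('s + 'g) CARD('s)"] conjI allI impI computable_reduction)
    (rule reduction_correct)

end
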